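(* Let $(V_1,\dots,V_n)$ and $(V_1',\dots,V_n')$ be $n$-tuples of doubly non-commuting isometries on Hilbert spaces $H$ and $H'$, with identical structure constants $z_{ij}$. Then the following are equivalent: (1) $(V_1,\dots,V_n)$ and $(V_1',\dots,V_n')$ are unitarily equivalent; (2) for every $A\subseteq\{1,\dots,n\}$, the $A$-wandering data $\mathcal D_A$ of $(V_1,\dots,V_n)$ and the $A$-wandering data $\mathcal D_A'$ of $(V_1',\dots,V_n')$ are unitarily equivalent.
   Context: Fix $n\ge1$ and $z_{ij}\in\mathbb T$ ($i\ne j$) with $z_{ji}=\overline{z_{ij}}$. An $n$-tuple of isometries $(V_1,\dots,V_n)$ on $H$ is doubly non-commuting if $V_i^*V_j=\overline{z_{ij}}V_jV_i^*$ for $i\neq j$. For $A\subseteq\{1,\dots,n\}$ with $A^c=\{j_1<\dots<j_m\}$, the $A$-wandering subspace is $W_A=\bigcap_{(m_j)\in\mathbb N_0^{A^c}}\big(\prod_{j\in A^c}V_j^{m_j}\big)\big(\bigcap_{i\in A}\ker V_i^*\big)$ (empty intersection of kernels $=H$, empty product $=$ identity); it reduces each $V_j$, $j\in A^c$, and the $A$-wandering data are the tuple $\mathcal D_A=(\mathbf 1_{W_A},V_{j_1}|_{W_A},\dots,V_{j_m}|_{W_A})$. Tuples $(T_1,\dots,T_r)$ on $K$ and $(T_1',\dots,T_r')$ on $K'$ are unitarily equivalent if there is a unitary $\varphi:K\to K'$ with $\varphi T_i=T_i'\varphi$ for all $i$. *)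

theory Defs
  imports "HOL-Analysis.Analysis"
begin

text \<open>A complex Hilbert space is encoded (equivalently) as a real Hilbert space
  (real inner product space, complete) together with an orthogonal complex
  structure \<open>imult\<close> (multiplication by the imaginary unit) with imult o imult = -id.\<close>

class complex_hilbert_space = real_inner + complete_space +
  fixes imult :: "'a \<Rightarrow> 'a"
  assumes imult_add: "imult (x + y) = imult x + imult y"
    and imult_scaleR: "imult (scaleR r x) = scaleR r (imult x)"
    and imult_imult: "imult (imult x) = - x"
    and inner_imult: "inner (imult x) (imult y) = inner x y"

definition scaleC :: "complex \<Rightarrow> 'a::complex_hilbert_space \<Rightarrow> 'a" where
  "scaleC c x = scaleR (Re c) x + scaleR (Im c) (imult x)"

text \<open>Complex inner product (linear in the first, conjugate-linear in the second argument);
  its real part is the real inner product and cinner x x = (norm x)^2.\<close>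
definition cinner :: "'a::complex_hilbert_space \<Rightarrow> 'a \<Rightarrow> complex" where
  "cinner x y = Complex (inner x y) (inner x (imult y))"

definition clinear_op :: "('a::complex_hilbert_space \<Rightarrow> 'b::complex_hilbert_space) \<Rightarrow> bool" where
  "clinear_op T \<longleftrightarrow> (\<forall>x y. T (x + y) = T x + T y) \<and> (\<forall>c x. T (scaleC c x) = scaleC c (T x))"

text \<open>Hilbert space adjoint (exists and is unique for bounded linear operators).\<close>
definition cadjoint :: "('a::complex_hilbert_space \<Rightarrow> 'a) \<Rightarrow> ('a \<Rightarrow> 'a)" where
  "cadjoint T = (SOME S. \<forall>x y. cinner (T x) y = cinner x (S y))"

definition isometry_op :: "('a::complex_hilbert_space \<Rightarrow> 'a) \<Rightarrow> bool" where
  "isometry_op V \<longleftrightarrow> clinear_op V \<and> (\<forall>x. norm (V x) = norm x)"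

definition doubly_noncommuting ::
  "nat \<Rightarrow> (nat \<Rightarrow> nat \<Rightarrow> complex) \<Rightarrow> (nat \<Rightarrow> 'a::complex_hilbert_space \<Rightarrow> 'a) \<Rightarrow> bool" where
  "doubly_noncommuting n z V \<longleftrightarrow>
     (\<forall>i\<in>{1..n}. isometry_op (V i)) \<and>
     (\<forall>i\<in>{1..n}. \<forall>j\<in>{1..n}. i \<noteq> j \<longrightarrow>
        (\<forall>x. cadjoint (V i) (V j x) = scaleC (cnj (z i j)) (V j (cadjoint (V i) x))))"

definition ordered_power_product ::
  "(nat \<Rightarrow> 'a \<Rightarrow> 'a) \<Rightarrow> nat set \<Rightarrow> (nat \<Rightarrow> nat) \<Rightarrow> ('a \<Rightarrow> 'a)" where
  "ordered_power_product V J m = foldr (\<lambda>j f. (V j ^^ m j) \<circ> f) (sorted_list_of_set J) id"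

definition wandering_subspace ::
  "nat \<Rightarrow> (nat \<Rightarrow> 'a::complex_hilbert_space \<Rightarrow> 'a) \<Rightarrow> nat set \<Rightarrow> 'a set" where
  "wandering_subspace n V A =
     (\<Inter>m \<in> {m. \<forall>j. j \<notin> {1..n} - A \<longrightarrow> m j = 0}.
        ordered_power_product V ({1..n} - A) m ` (\<Inter>i\<in>A. {x. cadjoint (V i) x = 0}))"

text \<open>A-wandering data: the tuple (identity, V_j for j in the complement of A), indexed by
  None (identity) and Some j (j in the complement), to be considered on the wandering subspace.\<close>
definition wandering_data ::
  "(nat \<Rightarrow> 'a \<Rightarrow> 'a) \<Rightarrow> nat option \<Rightarrow> 'a \<Rightarrow> 'a" where
  "wandering_data V k = (case k of None \<Rightarrow> id | Some j \<Rightarrow> V j)"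

definition wandering_index :: "nat \<Rightarrow> nat set \<Rightarrow> nat option set" where
  "wandering_index n A = insert None (Some ` ({1..n} - A))"

definition unitarily_equivalent ::
  "'a::complex_hilbert_space set \<Rightarrow> 'b::complex_hilbert_space set \<Rightarrow> 'i set \<Rightarrow>
   ('i \<Rightarrow> 'a \<Rightarrow> 'a) \<Rightarrow> ('i \<Rightarrow> 'b \<Rightarrow> 'b) \<Rightarrow> bool" where
  "unitarily_equivalent K K' I T T' \<longleftrightarrow>
    (\<exists>\<phi>. bij_betw \<phi> K K' \<and>
        (\<forall>x\<in>K. \<forall>y\<in>K. \<phi> (x + y) = \<phi> x + \<phi> y) \<and>
        (\<forall>c. \<forall>x\<in>K. \<phi> (scaleC c x) = scaleC c (\<phi> x)) \<and>
        (\<forall>x\<in>K. \<forall>y\<in>K. cinner (\<phi> x) (\<phi> y) = cinner x y) \<and>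
        (\<forall>k\<in>I. \<forall>x\<in>K. \<phi> (T k x) = T' k (\<phi> x)))"

end

theory Submission
  imports Defs "HOL-Library.Multiset"
begin

text \<open>
  Write \<open>W\<^sub>A\<close> for the \<open>A\<close>-wandering subspace and \<open>V\<^sup>\<alpha>\<close> for the product of the \<open>V\<^sub>i\<close> along a
  word \<open>\<alpha>\<close> in the letters of \<open>A\<close>. Performing the Wold decomposition of \<open>V\<^sub>1, \<dots>, V\<^sub>n\<close> one
  isometry at a time shows that the vectors \<open>V\<^sup>\<alpha> w\<close> with \<open>w \<in> W\<^sub>A\<close> span a dense subspace of \<open>H\<close>.
  The commutation relations determine their Gram matrix from the wandering data alone:
  \<open>V\<^sup>\<alpha> w \<perp> V\<^sup>\<beta> w'\<close> for \<open>w \<in> W\<^sub>A\<close>, \<open>w' \<in> W\<^sub>B\<close> unless \<open>A = B\<close> and \<open>\<beta>\<close> is a rearrangement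
  of \<open>\<alpha>\<close>, and in that case \<open>\<langle>V\<^sup>\<alpha> w, V\<^sup>\<beta> w'\<rangle>\<close> is \<open>\<langle>w, w'\<rangle>\<close> times a scalar depending only
  on \<open>\<alpha>\<close>, \<open>\<beta>\<close> and the \<open>z\<^sub>i\<^sub>j\<close>. Hence unitaries \<open>W\<^sub>A \<rightarrow> W'\<^sub>A\<close> intertwining the \<open>V\<^sub>j\<close>, \<open>j \<notin> A\<close>,
  assemble into a unitary \<open>H \<rightarrow> H'\<close> intertwining the tuples. Conversely, a unitary intertwining
  the tuples also intertwines their adjoints, so it maps each \<open>W\<^sub>A\<close> onto \<open>W'\<^sub>A\<close>.
\<close>

section \<open>Complex Hilbert spaces\<close>

lemma imult_zero [simp]: "imult (0::'a::complex_hilbert_space) = 0"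
  by (metis add_cancel_right_right imult_add)

lemma imult_minus: "imult (- x::'a::complex_hilbert_space) = - imult x"
  by (metis add.right_inverse add_eq_0_iff imult_add imult_zero)

lemma imult_diff: "imult (x - y::'a::complex_hilbert_space) = imult x - imult y"
  by (metis diff_conv_add_uminus imult_add imult_minus)

lemma inner_imult_right: "inner x (imult (y::'a::complex_hilbert_space)) = - inner (imult x) y"
  by (metis imult_imult inner_imult inner_minus_right)

lemma bounded_linear_imult: "bounded_linear (imult :: 'a::complex_hilbert_space \<Rightarrow> 'a)"
  by (rule bounded_linear_intro[where K=1])
    (auto simp: imult_add imult_scaleR norm_eq_sqrt_inner inner_imult)

lemma scaleC_mult: "scaleC (a * b) x = scaleC a (scaleC b (x::'a::complex_hilbert_space))"
  by (simp add: scaleC_def imult_add imult_scaleR imult_imult algebra_simps)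

lemma scaleC_one [simp]: "scaleC 1 x = (x::'a::complex_hilbert_space)"
  by (simp add: scaleC_def)

lemma scaleC_zero_left [simp]: "scaleC 0 x = (0::'a::complex_hilbert_space)"
  by (simp add: scaleC_def)

lemma scaleC_zero_right [simp]: "scaleC c 0 = (0::'a::complex_hilbert_space)"
  by (simp add: scaleC_def)

lemma scaleC_of_real: "scaleC (complex_of_real r) x = scaleR r (x::'a::complex_hilbert_space)"
  by (simp add: scaleC_def)

lemma scaleC_ii: "scaleC \<i> x = imult (x::'a::complex_hilbert_space)"
  by (simp add: scaleC_def)

lemma scaleC_minus_left: "scaleC (- c) x = - scaleC c (x::'a::complex_hilbert_space)"
  by (simp add: scaleC_def)

lemma cinner_add_right: "cinner x (y + z) = cinner x y + cinner x (z::'a::complex_hilbert_space)"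
  by (simp add: cinner_def inner_add_right imult_add complex_eq_iff)

lemma cinner_scaleC_left: "cinner (scaleC c x) y = c * cinner x (y::'a::complex_hilbert_space)"
  using inner_imult_right[of x y] inner_imult_right[of x "imult y"]
  by (simp add: scaleC_def cinner_def complex_eq_iff inner_add_left imult_imult algebra_simps)

lemma cinner_scaleC_right: "cinner x (scaleC c y) = cnj c * cinner x (y::'a::complex_hilbert_space)"
  by (simp add: scaleC_def cinner_def complex_eq_iff inner_add_right imult_add imult_scaleR
      inner_imult_right imult_imult algebra_simps)

lemma cinner_commute: "cinner y x = cnj (cinner x (y::'a::complex_hilbert_space))"
  using inner_imult_right[of y x] inner_imult_right[of x y]
  by (simp add: cinner_def complex_eq_iff inner_commute)

lemma cinner_zero_left [simp]: "cinner 0 (y::'a::complex_hilbert_space) = 0"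
  by (simp add: cinner_def complex_eq_iff)

lemma cinner_zero_right [simp]: "cinner x (0::'a::complex_hilbert_space) = 0"
  by (simp add: cinner_def complex_eq_iff)

lemma cinner_diff_left: "cinner (x - y) z = cinner x z - cinner y (z::'a::complex_hilbert_space)"
  by (simp add: cinner_def complex_eq_iff inner_diff_left)

lemma cinner_diff_right: "cinner x (y - z) = cinner x y - cinner x (z::'a::complex_hilbert_space)"
  by (simp add: cinner_def complex_eq_iff inner_diff_right imult_diff)

lemma cinner_self: "cinner x (x::'a::complex_hilbert_space) = complex_of_real ((norm x)\<^sup>2)"
  using inner_imult_right[of x x] by (simp add: cinner_def complex_eq_iff power2_norm_eq_inner inner_commute)

lemma cinner_self_eq_0 [simp]: "cinner x x = 0 \<longleftrightarrow> x = (0::'a::complex_hilbert_space)"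
  by (simp add: cinner_self)

lemma norm_eq_if_cinner_self_eq:
  "cinner x x = cinner y y \<Longrightarrow> norm (x::'a::complex_hilbert_space) = norm (y::'b::complex_hilbert_space)"
  by (metis cinner_self norm_ge_zero of_real_eq_iff power2_eq_imp_eq)

lemma cinner_ext: "(\<And>u. cinner u a = cinner u (b::'a::complex_hilbert_space)) \<Longrightarrow> a = b"
  by (metis cinner_diff_right cinner_self_eq_0 diff_eq_eq diff_self)

lemma continuous_on_cinner [continuous_intros]:
  fixes f g :: "'c::topological_space \<Rightarrow> 'a::complex_hilbert_space"
  assumes "continuous_on S f" "continuous_on S g"
  shows "continuous_on S (\<lambda>x. cinner (f x) (g x))"
  unfolding cinner_def Complex_eq
  by (intro continuous_intros assms bounded_linear.continuous_on[OF bounded_linear_imult])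



lemma clinear_zero: "clinear_op T \<Longrightarrow> T 0 = 0"
  unfolding clinear_op_def by (metis scaleC_zero_left)

lemma clinear_add: "clinear_op T \<Longrightarrow> T (x + y) = T x + T y"
  unfolding clinear_op_def by blast

lemma clinear_scaleC: "clinear_op T \<Longrightarrow> T (scaleC c x) = scaleC c (T x)"
  unfolding clinear_op_def by blast

lemma clinear_minus: "clinear_op T \<Longrightarrow> T (- x) = - T x"
  using clinear_scaleC[of T "-1" x] by (simp add: scaleC_minus_left)

lemma clinear_diff: "clinear_op T \<Longrightarrow> T (x - y) = T x - T y"
  using clinear_add[of T x "- y"] clinear_minus[of T y] by simp

lemma clinear_scaleR: "clinear_op T \<Longrightarrow> T (scaleR r x) = scaleR r (T x)"
  using clinear_scaleC[of T "complex_of_real r" x] by (simp add: scaleC_of_real)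

lemma clinear_imult: "clinear_op T \<Longrightarrow> T (imult x) = imult (T x)"
  using clinear_scaleC[of T "\<i>" x] by (simp add: scaleC_ii)

lemma clinear_sum: "clinear_op T \<Longrightarrow> T (sum f S) = (\<Sum>i\<in>S. T (f i))"
  by (induction S rule: infinite_finite_induct) (auto simp: clinear_zero clinear_add)

lemma clinear_comp: "clinear_op S \<Longrightarrow> clinear_op T \<Longrightarrow> clinear_op (S \<circ> T)"
  unfolding clinear_op_def by simp

lemma clinear_funpow: "clinear_op (T::'a::complex_hilbert_space \<Rightarrow> 'a) \<Longrightarrow> clinear_op (T ^^ k)"
  by (induction k) (auto simp: clinear_op_def)

lemma bounded_linear_if_clinear:
  "clinear_op T \<Longrightarrow> (\<And>x. norm (T x) \<le> K * norm x) \<Longrightarrow> bounded_linear T"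
  by (rule bounded_linear_intro[where K=K]) (auto simp: clinear_add clinear_scaleR mult.commute)

lemma funpow_commute_scaleC:
  fixes A B :: "'a::complex_hilbert_space \<Rightarrow> 'a"
  assumes "clinear_op B" "\<And>x. A (B x) = scaleC c (B (A x))"
  shows "A ((B ^^ r) x) = scaleC (c ^ r) ((B ^^ r) (A x))"
proof (induction r)
  case (Suc r)
  have "A ((B ^^ Suc r) x) = scaleC c (B (scaleC (c ^ r) ((B ^^ r) (A x))))"
    using assms(2) Suc by simp
  also have "\<dots> = scaleC (c ^ Suc r) ((B ^^ Suc r) (A x))"
    by (simp add: clinear_scaleC[OF assms(1)] scaleC_mult[symmetric] mult.commute)
  finally show ?case .
qed simp

lemma funpow_mem_range_funpow: "r \<le> s \<Longrightarrow> ((f::'a \<Rightarrow> 'a) ^^ s) u \<in> range (f ^^ r)"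
  by (metis funpow_add le_add_diff_inverse o_apply rangeI)

lemma isometry_clinear: "isometry_op V \<Longrightarrow> clinear_op V"
  unfolding isometry_op_def by blast

lemma isometry_norm: "isometry_op V \<Longrightarrow> norm (V x) = norm x"
  unfolding isometry_op_def by blast

lemma isometry_bounded_linear: "isometry_op V \<Longrightarrow> bounded_linear V"
  by (rule bounded_linear_if_clinear[where K=1]) (auto simp: isometry_op_def)

lemma isometry_comp: "isometry_op S \<Longrightarrow> isometry_op T \<Longrightarrow> isometry_op (S \<circ> T)"
  unfolding isometry_op_def by (simp add: clinear_comp)

lemma isometry_funpow: "isometry_op (V::'a::complex_hilbert_space \<Rightarrow> 'a) \<Longrightarrow> isometry_op (V ^^ k)"
  by (induction k) (auto simp: isometry_comp isometry_op_def clinear_op_def)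

lemma isometry_cinner:
  assumes "isometry_op V" shows "cinner (V x) (V y) = cinner x y"
proof -
  have "inner (V x) (V y) = inner x y" for x y
    using isometry_norm[OF assms, of "x + y"] isometry_norm[OF assms, of x] isometry_norm[OF assms, of y]
    by (simp add: clinear_add[OF isometry_clinear[OF assms]] dot_norm del: norm_eq_sqrt_inner)
  then show ?thesis
    by (simp add: cinner_def flip: clinear_imult[OF isometry_clinear[OF assms]])
qed

lemma Cauchy_if_dist_eq: "Cauchy s \<Longrightarrow> (\<And>a b. dist (t a) (t b) = dist (s a) (s b)) \<Longrightarrow> Cauchy t"
  unfolding Cauchy_def by simp

lemma isometry_closed_range:
  assumes V: "isometry_op V" shows "closed (range V)"
proof (rule closed_sequential_limits[THEN iffD2], intro allI impI, elim conjE)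
  fix s l assume "\<forall>k. s k \<in> range V" and lim: "s \<longlonglongrightarrow> l"
  then have "\<forall>k. \<exists>u. s k = V u" by blast
  then obtain t where t: "\<And>k. s k = V (t k)" by metis
  have "dist (t a) (t b) = dist (s a) (s b)" for a b
    by (simp add: t dist_norm isometry_norm[OF V] flip: clinear_diff[OF isometry_clinear[OF V]])
  then have "Cauchy t"
    using Cauchy_if_dist_eq LIMSEQ_imp_Cauchy[OF lim] by blast
  then obtain u where u: "t \<longlonglongrightarrow> u"
    using Cauchy_convergent_iff convergent_def by blast
  have "(\<lambda>k. V (t k)) \<longlonglongrightarrow> V u"
    using u by (intro bounded_linear.tendsto[OF isometry_bounded_linear[OF V]])
  moreover have "(\<lambda>k. V (t k)) = s"
    using t by auto
  ultimately have "l = V u"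
    using lim LIMSEQ_unique by auto
  then show "l \<in> range V" by simp
qed

definition csubspace :: "'a::complex_hilbert_space set \<Rightarrow> bool" where
  "csubspace M \<longleftrightarrow> 0 \<in> M \<and> (\<forall>x\<in>M. \<forall>y\<in>M. x + y \<in> M) \<and> (\<forall>c. \<forall>x\<in>M. scaleC c x \<in> M)"

lemma csubspace_zero: "csubspace M \<Longrightarrow> 0 \<in> M"
  unfolding csubspace_def by blast

lemma csubspace_add: "csubspace M \<Longrightarrow> x \<in> M \<Longrightarrow> y \<in> M \<Longrightarrow> x + y \<in> M"
  unfolding csubspace_def by blast

lemma csubspace_scaleC: "csubspace M \<Longrightarrow> x \<in> M \<Longrightarrow> scaleC c x \<in> M"
  unfolding csubspace_def by blast

lemma csubspace_imult: "csubspace M \<Longrightarrow> x \<in> M \<Longrightarrow> imult x \<in> M"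
  using csubspace_scaleC[of M x "\<i>"] by (simp add: scaleC_ii)

lemma csubspace_diff: "csubspace M \<Longrightarrow> x \<in> M \<Longrightarrow> y \<in> M \<Longrightarrow> x - y \<in> M"
  using csubspace_add[of M x "scaleC (-1) y"] csubspace_scaleC[of M y "-1"]
  by (simp add: scaleC_minus_left)

lemma csubspace_sum: "csubspace M \<Longrightarrow> (\<And>i. i \<in> S \<Longrightarrow> f i \<in> M) \<Longrightarrow> sum f S \<in> M"
  by (induction S rule: infinite_finite_induct) (auto intro: csubspace_add csubspace_zero)

lemma csubspace_Int: "csubspace M \<Longrightarrow> csubspace N \<Longrightarrow> csubspace (M \<inter> N)"
  by (simp add: csubspace_def)

lemma csubspace_INT: "(\<And>i. i \<in> A \<Longrightarrow> csubspace (M i)) \<Longrightarrow> csubspace (\<Inter>i\<in>A. M i)"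
  by (simp add: csubspace_def)

lemma subspace_if_csubspace: "csubspace M \<Longrightarrow> subspace M"
  unfolding subspace_def
  by (metis csubspace_zero csubspace_add csubspace_scaleC scaleC_of_real)

lemma csubspace_range: "clinear_op T \<Longrightarrow> csubspace (range T)"
  unfolding csubspace_def
  by (auto simp: clinear_zero[symmetric] clinear_add[symmetric] clinear_scaleC[symmetric])

lemma csubspace_kernel: "clinear_op T \<Longrightarrow> csubspace {x. T x = 0}"
  by (simp add: csubspace_def clinear_zero clinear_add clinear_scaleC)

definition closed_cspan :: "'a::complex_hilbert_space set \<Rightarrow> 'a set" where
  "closed_cspan S = \<Inter>{M. S \<subseteq> M \<and> closed M \<and> csubspace M}"

lemma closed_cspan_superset: "S \<subseteq> closed_cspan S"
  unfolding closed_cspan_def by blast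

lemma closed_cspan_least: "S \<subseteq> M \<Longrightarrow> closed M \<Longrightarrow> csubspace M \<Longrightarrow> closed_cspan S \<subseteq> M"
  unfolding closed_cspan_def by blast

lemma closed_closed_cspan: "closed (closed_cspan S)"
  unfolding closed_cspan_def by (rule closed_Inter) blast

lemma csubspace_closed_cspan: "csubspace (closed_cspan S)"
  unfolding closed_cspan_def csubspace_def by blast

lemma closed_cspan_eq_UNIV_mono:
  "closed_cspan S = UNIV \<Longrightarrow> S \<subseteq> T \<Longrightarrow> closed_cspan T = UNIV"
  using closed_cspan_least[of S "closed_cspan T"] closed_cspan_superset[of T]
  by (auto simp: closed_closed_cspan csubspace_closed_cspan)

lemma clinear_eq_closed_cspan_UNIV:
  fixes f h :: "'a::complex_hilbert_space \<Rightarrow> 'b::complex_hilbert_space"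
  assumes "closed_cspan S = UNIV" "bounded_linear f" "bounded_linear h"
    "clinear_op f" "clinear_op h" "\<And>x. x \<in> S \<Longrightarrow> f x = h x"
  shows "f x = h x"
proof -
  have "csubspace {x. f x = h x}"
    using assms(4,5) by (simp add: csubspace_def clinear_zero clinear_add clinear_scaleC)
  moreover have "closed {x. f x = h x}"
    using assms(2,3) by (intro closed_Collect_eq linear_continuous_on) auto
  ultimately have "closed_cspan S \<subseteq> {x. f x = h x}"
    using assms(6) by (intro closed_cspan_least) auto
  then show ?thesis using assms(1) by auto
qed

section \<open>Nearest points and adjoints\<close>

lemma parallelogram_law:
  "(norm (a - b))\<^sup>2 = 2 * (norm a)\<^sup>2 + 2 * (norm b)\<^sup>2 - (norm (a + b))\<^sup>2" for a b :: "'a::real_inner"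
  by (simp add: power2_norm_eq_inner inner_add_left inner_add_right inner_diff_left
      inner_diff_right inner_commute)

lemma convex_near_points_close:
  fixes x :: "'a::real_inner"
  assumes "convex M" "a \<in> M" "b \<in> M" and d: "\<And>m. m \<in> M \<Longrightarrow> d \<le> dist x m" "0 \<le> d"
    and e: "dist x a \<le> d + e" "dist x b \<le> d + e"
  shows "(dist a b)\<^sup>2 \<le> 4 * e * (2 * d + e)"
proof -
  have "scaleR (1/2) a + scaleR (1/2) b \<in> M"
    using assms(1-3) by (rule convexD) auto
  moreover have "(x - a) + (x - b) = scaleR 2 (x - (scaleR (1/2) a + scaleR (1/2) b))"
    by (simp add: algebra_simps scaleR_2)
  ultimately have mid: "2 * d \<le> norm ((x - a) + (x - b))"
    using d by (simp add: dist_norm)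
  have "(dist a b)\<^sup>2 = 2 * (norm (x - a))\<^sup>2 + 2 * (norm (x - b))\<^sup>2 - (norm ((x - a) + (x - b)))\<^sup>2"
    using parallelogram_law[of "x - a" "x - b"] by (simp add: dist_norm norm_minus_commute)
  also have "\<dots> \<le> 2 * (d + e)\<^sup>2 + 2 * (d + e)\<^sup>2 - (2 * d)\<^sup>2"
    using e mid d(2) by (intro diff_mono add_mono mult_left_mono power_mono) (auto simp: dist_norm)
  also have "\<dots> = 4 * e * (2 * d + e)"
    by (simp add: power2_eq_square algebra_simps)
  finally show ?thesis .
qed

lemma minimizing_sequence_Cauchy:
  fixes x :: "'a::real_inner"
  assumes M: "convex M" "\<And>k. m k \<in> M" and d: "\<And>y. y \<in> M \<Longrightarrow> d \<le> dist x y" "0 \<le> d"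
    and md: "\<And>k. dist x (m k) < d + 1 / Suc k"
  shows "Cauchy m"
proof (rule metric_CauchyI)
  fix \<epsilon> :: real assume "\<epsilon> > 0"
  obtain N where "4 * (2 * d + 1) / \<epsilon>\<^sup>2 < real N"
    using reals_Archimedean2 by blast
  then have N: "4 * (2 * d + 1) / \<epsilon>\<^sup>2 < Suc N"
    by simp
  have "dist (m k) (m l) < \<epsilon>" if "N \<le> k" "N \<le> l" for k l
  proof -
    define e where "e = 1 / real (Suc N)"
    have "1 / real (Suc k) \<le> e" "1 / real (Suc l) \<le> e" "e \<le> 1"
      using that by (auto simp: e_def frac_le)
    then have "(dist (m k) (m l))\<^sup>2 \<le> 4 * e * (2 * d + e)"
      using md[of k] md[of l] by (intro convex_near_points_close[OF M(1,2,2) d]) auto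
    also have "\<dots> \<le> 4 * e * (2 * d + 1)"
      using \<open>e \<le> 1\<close> by (intro mult_left_mono) (auto simp: e_def)
    also have "\<dots> < \<epsilon>\<^sup>2"
      using N \<open>\<epsilon> > 0\<close> by (simp add: e_def field_simps)
    finally show ?thesis
      using \<open>\<epsilon> > 0\<close> by (simp add: power_less_imp_less_base)
  qed
  then show "\<exists>N. \<forall>k\<ge>N. \<forall>l\<ge>N. dist (m k) (m l) < \<epsilon>" by blast
qed

lemma closed_convex_nearest_point:
  fixes M :: "'a::{real_inner, complete_space} set"
  assumes M: "closed M" "convex M" "M \<noteq> {}"
  obtains p where "p \<in> M" "\<And>m. m \<in> M \<Longrightarrow> dist x p \<le> dist x m"
proof -
  define d where "d = infdist x M"
  have d: "d \<le> dist x m" if "m \<in> M" for m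
    using that by (simp add: d_def infdist_le)
  have "\<exists>m\<in>M. dist x m < d + 1 / Suc k" for k
  proof (rule ccontr)
    assume "\<not> ?thesis"
    then have "d + 1 / Suc k \<le> d"
      unfolding d_def infdist_notempty[OF M(3)] by (intro cINF_greatest M(3)) auto
    then show False by simp
  qed
  then obtain m where mM: "\<And>k. m k \<in> M" and md: "\<And>k. dist x (m k) < d + 1 / Suc k"
    by metis
  have "0 \<le> d"
    unfolding d_def by (rule infdist_nonneg)
  then have "Cauchy m"
    using M(2) mM d md by (intro minimizing_sequence_Cauchy)
  then obtain p where p: "m \<longlonglongrightarrow> p"
    using Cauchy_convergent_iff convergent_def by blast
  have "(\<lambda>k. d + 1 / Suc k) \<longlonglongrightarrow> d + 0"
    by (intro tendsto_intros LIMSEQ_Suc[OF lim_inverse_n'[unfolded inverse_eq_divide]])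
  then have "dist x p \<le> d"
    using md by (intro LIMSEQ_le[OF tendsto_dist[OF tendsto_const p]]) (auto intro: less_imp_le)
  then show thesis
    using that closed_sequentially[OF M(1) mM p] d by fastforce
qed

lemma nearest_point_orthogonal:
  fixes M :: "'a::real_inner set"
  assumes "subspace M" "p \<in> M" "\<And>m. m \<in> M \<Longrightarrow> dist x p \<le> dist x m" "u \<in> M"
  shows "inner (x - p) u = 0"
proof -
  define a where "a = inner (x - p) u"
  define b where "b = inner u u"
  have quadratic: "0 \<le> t\<^sup>2 * b - 2 * t * a" for t
  proof -
    have "p + scaleR t u \<in> M"
      using assms by (simp add: subspace_add subspace_scale)
    then have "norm (x - p) \<le> norm ((x - p) - scaleR t u)"
      using assms(3) by (simp add: dist_norm algebra_simps)
    then have "(norm (x - p))\<^sup>2 \<le> (norm ((x - p) - scaleR t u))\<^sup>2"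
      by (simp add: power_mono)
    also have "\<dots> = (norm (x - p))\<^sup>2 - 2 * t * a + t\<^sup>2 * b"
      unfolding power2_norm_eq_inner a_def b_def
      by (simp add: inner_diff_left inner_diff_right inner_commute power2_eq_square)
    finally show ?thesis by simp
  qed
  show ?thesis
  proof (cases "u = 0")
    case False
    then have "b > 0" by (simp add: b_def)
    have "0 \<le> (a / b)\<^sup>2 * b - 2 * (a / b) * a" by (rule quadratic)
    also have "\<dots> = - (a\<^sup>2 / b)"
      using \<open>b > 0\<close> by (simp add: power2_eq_square field_simps)
    finally show ?thesis
      using \<open>b > 0\<close> by (simp add: a_def divide_le_0_iff)
  qed simp
qed

lemma orthogonal_projection_exists:
  fixes M :: "'a::complex_hilbert_space set"
  assumes "closed M" "csubspace M"
  obtains p where "p \<in> M" "\<And>m. m \<in> M \<Longrightarrow> cinner (x - p) m = 0"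
proof -
  have M: "subspace M" using assms(2) by (rule subspace_if_csubspace)
  obtain p where p: "p \<in> M" "\<And>m. m \<in> M \<Longrightarrow> dist x p \<le> dist x m"
    using closed_convex_nearest_point[OF assms(1) subspace_imp_convex[OF M]] subspace_0[OF M] by blast
  have "cinner (x - p) m = 0" if "m \<in> M" for m
    using nearest_point_orthogonal[OF M p, of m] that
      nearest_point_orthogonal[OF M p csubspace_imult[OF assms(2) that]]
    by (simp add: cinner_def complex_eq_iff)
  then show thesis using that p(1) by blast
qed

lemma isometry_adjoint_exists:
  fixes V :: "'a::complex_hilbert_space \<Rightarrow> 'a"
  assumes V: "isometry_op V"
  shows "\<exists>S. \<forall>x y. cinner (V x) y = cinner x (S y)"
proof -
  have "\<exists>s. \<forall>m\<in>range V. cinner (y - V s) m = 0" for y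
  proof -
    obtain p where "p \<in> range V" "\<And>m. m \<in> range V \<Longrightarrow> cinner (y - p) m = 0"
      using orthogonal_projection_exists[OF isometry_closed_range[OF V]
          csubspace_range[OF isometry_clinear[OF V]], where x=y] by blast
    then show ?thesis by blast
  qed
  then obtain S where S: "\<And>y m. m \<in> range V \<Longrightarrow> cinner (y - V (S y)) m = 0" by metis
  have "cinner (V x) y = cinner x (S y)" for x y
  proof -
    have "cinner (V x) (y - V (S y)) = 0"
      using S[of "V x" y] by (subst cinner_commute) simp
    then show ?thesis by (simp add: cinner_diff_right isometry_cinner[OF V])
  qed
  then show ?thesis by blast
qed

lemma cinner_cadjoint:
  assumes "isometry_op V" shows "cinner (V x) y = cinner x (cadjoint V y)"
  using someI_ex[OF isometry_adjoint_exists[OF assms]] unfolding cadjoint_def by blast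

lemma cinner_cadjoint':
  "isometry_op V \<Longrightarrow> cinner y (V x) = cinner (cadjoint V y) x"
  using cinner_cadjoint[of V x y] cinner_commute[of y "V x"] cinner_commute[of "cadjoint V y" x]
  by simp

lemma cadjoint_isometry_left_inverse: "isometry_op V \<Longrightarrow> cadjoint V (V x) = x"
  by (rule cinner_ext) (simp add: cinner_cadjoint[symmetric] isometry_cinner)

lemma clinear_cadjoint:
  assumes "isometry_op V" shows "clinear_op (cadjoint V)"
proof -
  have "cadjoint V (x + y) = cadjoint V x + cadjoint V y" for x y
    by (rule cinner_ext) (simp add: cinner_cadjoint[OF assms, symmetric] cinner_add_right)
  moreover have "cadjoint V (scaleC c x) = scaleC c (cadjoint V x)" for c x
    by (rule cinner_ext) (simp add: cinner_cadjoint[OF assms, symmetric] cinner_scaleC_right)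
  ultimately show ?thesis
    unfolding clinear_op_def by blast
qed

lemma norm_cadjoint_le: assumes V: "isometry_op V" shows "norm (cadjoint V y) \<le> norm y"
proof -
  have "(norm (cadjoint V y))\<^sup>2 = Re (cinner (V (cadjoint V y)) y)"
    by (simp add: cinner_cadjoint[OF V] cinner_self)
  also have "\<dots> \<le> norm (V (cadjoint V y)) * norm y"
    by (simp add: cinner_def norm_cauchy_schwarz)
  also have "\<dots> = norm (cadjoint V y) * norm y"
    by (simp add: isometry_norm[OF V])
  finally show ?thesis
    by (cases "norm (cadjoint V y) = 0") (auto simp: power2_eq_square)
qed

lemma bounded_linear_cadjoint: "isometry_op V \<Longrightarrow> bounded_linear (cadjoint V)"
  by (rule bounded_linear_if_clinear[where K=1]) (auto simp: clinear_cadjoint norm_cadjoint_le)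

section \<open>Unitaries determined by Gram matrices\<close>

instantiation prod :: (complex_hilbert_space, complex_hilbert_space) complex_hilbert_space
begin

definition imult_prod :: "'a \<times> 'b \<Rightarrow> 'a \<times> 'b" where
  "imult_prod p = (imult (fst p), imult (snd p))"

instance
  by standard (auto simp: imult_prod_def imult_add imult_scaleR imult_imult inner_imult inner_prod_def)

end

lemma fst_scaleC [simp]: "fst (scaleC c p) = scaleC c (fst p)"
  and snd_scaleC [simp]: "snd (scaleC c p) = scaleC c (snd p)"
  by (simp_all add: scaleC_def imult_prod_def)

lemma scaleC_Pair [simp]: "scaleC c (x, y) = (scaleC c x, scaleC c y)"
  by (simp add: prod_eq_iff)

lemma clinear_fst: "clinear_op fst"
  and clinear_swap: "clinear_op prod.swap"
  by (simp_all add: clinear_op_def prod_eq_iff)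

lemma csubspace_image:
  assumes "clinear_op f" "csubspace M" shows "csubspace (f ` M)"
  unfolding csubspace_def
proof (intro conjI ballI allI)
  show "0 \<in> f ` M"
    using assms by (metis clinear_zero csubspace_zero image_eqI)
  show "x + y \<in> f ` M" if "x \<in> f ` M" "y \<in> f ` M" for x y
    using that assms by (auto simp: clinear_add[OF assms(1), symmetric] intro: csubspace_add)
  show "scaleC c x \<in> f ` M" if "x \<in> f ` M" for c x
    using that assms by (auto simp: clinear_scaleC[OF assms(1), symmetric] intro: csubspace_scaleC)
qed

lemma converse_eq_swap_image: "G\<inverse> = prod.swap ` G"
  by force

lemma closed_converse:
  assumes "closed G" shows "closed (G\<inverse>)"
proof -
  have "G\<inverse> = prod.swap -` G \<inter> UNIV" by force
  then show ?thesis
    using assms continuous_on_closed_vimage[of UNIV prod.swap] continuous_on_swap by auto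
qed

lemma csubspace_converse: "csubspace G \<Longrightarrow> csubspace (G\<inverse>)"
  unfolding converse_eq_swap_image by (rule csubspace_image[OF clinear_swap])

lemma isometric_graph_Domain:
  fixes G :: "('a::complex_hilbert_space \<times> 'b::complex_hilbert_space) set"
  assumes G: "closed G" "csubspace G"
    and iso: "\<And>x y x' y'. (x, y) \<in> G \<Longrightarrow> (x', y') \<in> G \<Longrightarrow> cinner x x' = cinner y y'"
    and S: "closed_cspan S = UNIV" "S \<subseteq> Domain G"
  shows "Domain G = UNIV"
proof -
  have "closed (Domain G)"
  proof (rule closed_sequential_limits[THEN iffD2], intro allI impI, elim conjE)
    fix s l assume "\<forall>k. s k \<in> Domain G" and lim: "s \<longlonglongrightarrow> l"
    then have "\<forall>k. \<exists>y. (s k, y) \<in> G" by blast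
    then obtain t where t: "\<And>k. (s k, t k) \<in> G" by metis
    have "dist (t a) (t b) = dist (s a) (s b)" for a b
    proof -
      have diff: "(s a - s b, t a - t b) \<in> G"
        using csubspace_diff[OF G(2) t[of a] t[of b]] by simp
      show ?thesis
        unfolding dist_norm by (rule norm_eq_if_cinner_self_eq[OF iso[OF diff diff], symmetric])
    qed
    then have "Cauchy t"
      using Cauchy_if_dist_eq LIMSEQ_imp_Cauchy[OF lim] by blast
    then obtain u where "t \<longlonglongrightarrow> u"
      using Cauchy_convergent_iff convergent_def by blast
    then have "(l, u) \<in> G"
      using closed_sequentially[OF G(1), of "\<lambda>k. (s k, t k)"] t tendsto_Pair[OF lim] by blast
    then show "l \<in> Domain G" by (rule DomainI)
  qed
  moreover have "csubspace (Domain G)"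
    using csubspace_image[OF clinear_fst G(2)] by (simp add: fst_eq_Domain)
  ultimately have "closed_cspan S \<subseteq> Domain G"
    using S(2) by (intro closed_cspan_least)
  then show ?thesis using S(1) by blast
qed

lemma isometric_graph_function:
  fixes G :: "('a::complex_hilbert_space \<times> 'b::complex_hilbert_space) set"
  assumes G: "csubspace G"
    and iso: "\<And>x y x' y'. (x, y) \<in> G \<Longrightarrow> (x', y') \<in> G \<Longrightarrow> cinner x x' = cinner y y'"
    and dom: "Domain G = UNIV" and ran: "Range G = UNIV"
  obtains \<phi> where "bij \<phi>" "clinear_op \<phi>" "\<And>x y. cinner (\<phi> x) (\<phi> y) = cinner x y"
    "\<And>x y. (x, y) \<in> G \<Longrightarrow> \<phi> x = y"
proof -
  have unique: "y = y'" if "(x, y) \<in> G" "(x, y') \<in> G" for x y y'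
    using iso[of 0 "y - y'" 0 "y - y'"] csubspace_diff[OF G that] by simp
  have "\<forall>x. \<exists>y. (x, y) \<in> G"
    using dom by blast
  then obtain \<phi> where graph: "\<And>x. (x, \<phi> x) \<in> G"
    by metis
  have graph_eq: "\<phi> x = y" if "(x, y) \<in> G" for x y
    using unique[OF graph that] .
  show thesis
  proof
    have "\<phi> (x + y) = \<phi> x + \<phi> y" for x y
      using csubspace_add[OF G graph graph] by (intro graph_eq) simp
    moreover have "\<phi> (scaleC c x) = scaleC c (\<phi> x)" for c x
      using csubspace_scaleC[OF G graph[of x], of c] by (intro graph_eq) simp
    ultimately show "clinear_op \<phi>"
      unfolding clinear_op_def by blast
    show "cinner (\<phi> x) (\<phi> y) = cinner x y" for x y
      using iso[OF graph graph] by simp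
    show "\<phi> x = y" if "(x, y) \<in> G" for x y
      using that by (rule graph_eq)
    have "inj \<phi>"
    proof (rule injI)
      fix x x' assume "\<phi> x = \<phi> x'"
      then have "(x - x', 0) \<in> G"
        using csubspace_diff[OF G graph graph, of x x'] by simp
      then show "x = x'"
        using iso[of "x - x'" 0 "x - x'" 0] by simp
    qed
    moreover have "y \<in> range \<phi>" for y
    proof -
      have "y \<in> Range G" using ran by simp
      then obtain x where "(x, y) \<in> G" by blast
      then show ?thesis
        using graph_eq by blast
    qed
    then have "surj \<phi>" by blast
    ultimately show "bij \<phi>" by (rule bijI)
  qed
qed

lemma closed_cspan_pairs_isometric:
  fixes g :: "'i \<Rightarrow> 'a::complex_hilbert_space" and g' :: "'i \<Rightarrow> 'b::complex_hilbert_space"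
  assumes gram: "\<And>a b. a \<in> J \<Longrightarrow> b \<in> J \<Longrightarrow> cinner (g a) (g b) = cinner (g' a) (g' b)"
    and "(x, y) \<in> closed_cspan ((\<lambda>a. (g a, g' a)) ` J)" "(x', y') \<in> closed_cspan ((\<lambda>a. (g a, g' a)) ` J)"
  shows "cinner x x' = cinner y y'"
proof -
  let ?G = "closed_cspan ((\<lambda>a. (g a, g' a)) ` J)"
  have isometric_on: "?G \<subseteq> {q. cinner u (fst q) = cinner v (snd q)}"
    if "\<And>a. a \<in> J \<Longrightarrow> cinner u (g a) = cinner v (g' a)" for u v
  proof (rule closed_cspan_least)
    show "closed {q. cinner u (fst q) = cinner v (snd q)}"
      by (intro closed_Collect_eq continuous_intros)
    show "csubspace {q. cinner u (fst q) = cinner v (snd q)}"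
      by (simp add: csubspace_def cinner_add_right cinner_scaleC_right)
    show "(\<lambda>a. (g a, g' a)) ` J \<subseteq> {q. cinner u (fst q) = cinner v (snd q)}"
      using that by (simp add: image_subset_iff)
  qed
  have "cinner x (g a) = cinner y (g' a)" if "a \<in> J" for a
  proof -
    have "cinner (g a) x = cinner (g' a) y"
      using isometric_on[of "g a" "g' a"] gram[OF that] assms(2) by auto
    then show ?thesis
      using cinner_commute[of x "g a"] cinner_commute[of y "g' a"] by simp
  qed
  then show ?thesis
    using isometric_on[of x y] assms(3) by auto
qed

text \<open>The unitary is read off from the closed span of the pairs \<open>(g a, g' a)\<close>, which the Gram
  condition makes the graph of an isometry.\<close>

lemma unitary_extension:
  fixes g :: "'i \<Rightarrow> 'a::complex_hilbert_space" and g' :: "'i \<Rightarrow> 'b::complex_hilbert_space"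
  assumes gram: "\<And>a b. a \<in> J \<Longrightarrow> b \<in> J \<Longrightarrow> cinner (g a) (g b) = cinner (g' a) (g' b)"
    and spans: "closed_cspan (g ` J) = UNIV" "closed_cspan (g' ` J) = UNIV"
  obtains \<phi> where "bij \<phi>" "clinear_op \<phi>" "\<And>x y. cinner (\<phi> x) (\<phi> y) = cinner x y"
    "\<And>a. a \<in> J \<Longrightarrow> \<phi> (g a) = g' a"
proof -
  define G where "G = closed_cspan ((\<lambda>a. (g a, g' a)) ` J)"
  have G: "closed G" "csubspace G"
    by (simp_all add: G_def closed_closed_cspan csubspace_closed_cspan)
  have gen: "(g a, g' a) \<in> G" if "a \<in> J" for a
    using that closed_cspan_superset[of "(\<lambda>a. (g a, g' a)) ` J"] unfolding G_def by blast
  have iso: "cinner x x' = cinner y y'" if "(x, y) \<in> G" "(x', y') \<in> G" for x y x' y'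
    using closed_cspan_pairs_isometric[where g=g and g'=g', OF gram] that unfolding G_def by simp
  have iso_converse: "cinner x x' = cinner y y'" if "(x, y) \<in> G\<inverse>" "(x', y') \<in> G\<inverse>" for x y x' y'
    using iso[of y x y' x'] that by simp
  have "g ` J \<subseteq> Domain G"
    using gen by (blast intro: DomainI)
  then have "Domain G = UNIV"
    using isometric_graph_Domain[OF G iso spans(1)] by simp
  moreover have "g' ` J \<subseteq> Domain (G\<inverse>)"
    using gen by (blast intro: DomainI converseI)
  then have "Range G = UNIV"
    using isometric_graph_Domain[OF closed_converse[OF G(1)] csubspace_converse[OF G(2)]
        iso_converse spans(2)] by simp
  ultimately obtain \<phi> where "bij \<phi>" "clinear_op \<phi>" "\<And>x y. cinner (\<phi> x) (\<phi> y) = cinner x y"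
    "\<And>x y. (x, y) \<in> G \<Longrightarrow> \<phi> x = y"
    using isometric_graph_function[OF G(2) iso] by blast
  then show thesis
    using that gen by blast
qed

section \<open>Doubly non-commuting tuples\<close>

fun word :: "(nat \<Rightarrow> 'a \<Rightarrow> 'a) \<Rightarrow> nat list \<Rightarrow> 'a \<Rightarrow> 'a" where
  "word V [] x = x"
| "word V (l # ls) x = V l (word V ls x)"

lemma word_append: "word V (ls @ ms) x = word V ls (word V ms x)"
  by (induction ls) auto

lemma word_replicate: "word V (replicate r i) x = (V i ^^ r) x"
  by (induction r) auto

fun insort_coeff :: "(nat \<Rightarrow> nat \<Rightarrow> complex) \<Rightarrow> nat \<Rightarrow> nat list \<Rightarrow> complex" where
  "insort_coeff z l [] = 1"
| "insort_coeff z l (m # ms) = (if l \<le> m then 1 else z l m * insort_coeff z l ms)"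

fun sort_coeff :: "(nat \<Rightarrow> nat \<Rightarrow> complex) \<Rightarrow> nat list \<Rightarrow> complex" where
  "sort_coeff z [] = 1"
| "sort_coeff z (l # ls) = sort_coeff z ls * insort_coeff z l (sort ls)"

definition power_product :: "(nat \<Rightarrow> 'a \<Rightarrow> 'a) \<Rightarrow> (nat \<Rightarrow> nat) \<Rightarrow> nat list \<Rightarrow> 'a \<Rightarrow> 'a" where
  "power_product V m L = foldr (\<lambda>j f. (V j ^^ m j) \<circ> f) L id"

lemma power_product_Nil [simp]: "power_product V m [] = id"
  and power_product_Cons [simp]: "power_product V m (j # L) = (V j ^^ m j) \<circ> power_product V m L"
  by (simp_all add: power_product_def)

lemma ordered_power_product_eq: "ordered_power_product V J m = power_product V m (sorted_list_of_set J)"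
  by (simp add: ordered_power_product_def power_product_def)

lemma power_product_eq_id: "(\<And>k. k \<in> set L \<Longrightarrow> m k = 0) \<Longrightarrow> power_product V m L = id"
  by (induction L) auto

lemma power_product_single:
  "distinct L \<Longrightarrow> j \<in> set L \<Longrightarrow> (\<And>k. k \<in> set L \<Longrightarrow> k \<noteq> j \<Longrightarrow> m k = 0) \<Longrightarrow>
    power_product V m L = V j ^^ m j"
proof (induction L)
  case (Cons a L)
  show ?case
  proof (cases "a = j")
    case True
    have "power_product V m L = id"
      using Cons.prems True by (intro power_product_eq_id) auto
    then show ?thesis using True by simp
  next
    case False
    then show ?thesis using Cons by simp
  qed
qed simp

locale doubly_noncommuting_tuple =
  fixes n :: nat and z :: "nat \<Rightarrow> nat \<Rightarrow> complex" and V :: "nat \<Rightarrow> 'a::complex_hilbert_space \<Rightarrow> 'a"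
  assumes unimodular: "\<forall>i\<in>{1..n}. \<forall>j\<in>{1..n}. i \<noteq> j \<longrightarrow> cmod (z i j) = 1 \<and> z j i = cnj (z i j)"
    and doubly_noncommuting: "doubly_noncommuting n z V"
begin

abbreviation I :: "nat set" where "I \<equiv> {1..n}"

abbreviation Vs :: "nat \<Rightarrow> 'a \<Rightarrow> 'a" where "Vs i \<equiv> cadjoint (V i)"

lemma isometry_V: "i \<in> I \<Longrightarrow> isometry_op (V i)"
  using doubly_noncommuting by (simp add: doubly_noncommuting_def)

lemma clinear_V: "i \<in> I \<Longrightarrow> clinear_op (V i)"
  by (simp add: isometry_V isometry_clinear)

lemma clinear_Vs: "i \<in> I \<Longrightarrow> clinear_op (Vs i)"
  by (simp add: isometry_V clinear_cadjoint)

lemma isometry_V_funpow: "i \<in> I \<Longrightarrow> isometry_op (V i ^^ r)"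
  by (simp add: isometry_V isometry_funpow)

lemma clinear_V_funpow: "i \<in> I \<Longrightarrow> clinear_op (V i ^^ r)"
  by (simp add: clinear_V clinear_funpow)

lemma Vs_V_commute:
  "i \<in> I \<Longrightarrow> j \<in> I \<Longrightarrow> i \<noteq> j \<Longrightarrow> Vs i (V j x) = scaleC (cnj (z i j)) (V j (Vs i x))"
  using doubly_noncommuting by (simp add: doubly_noncommuting_def)

lemma z_mult_cnj: "i \<in> I \<Longrightarrow> j \<in> I \<Longrightarrow> i \<noteq> j \<Longrightarrow> z i j * cnj (z i j) = 1"
  using unimodular by (metis complex_norm_square of_real_1 power_one)

lemma cnj_z_swap: "i \<in> I \<Longrightarrow> j \<in> I \<Longrightarrow> i \<noteq> j \<Longrightarrow> cnj (z j i) = z i j"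
  using unimodular by (metis complex_cnj_cnj)

text \<open>The defect \<open>D\<close> below is annihilated by \<open>V\<^sub>i\<^sup>*\<close> and \<open>V\<^sub>j\<^sup>*\<close>, so it is orthogonal to both
  of its terms.\<close>

lemma V_commute:
  assumes ij: "i \<in> I" "j \<in> I" "i \<noteq> j"
  shows "V i (V j x) = scaleC (z i j) (V j (V i x))"
proof -
  define D where "D = V i (V j x) - scaleC (z i j) (V j (V i x))"
  have "Vs i D = V j x - scaleC (z i j * cnj (z i j)) (V j x)"
    using ij by (simp add: D_def clinear_diff[OF clinear_Vs] clinear_scaleC[OF clinear_Vs]
        cadjoint_isometry_left_inverse isometry_V Vs_V_commute scaleC_mult)
  then have Vs_i: "Vs i D = 0"
    using z_mult_cnj[OF ij] by simp
  have "Vs j D = scaleC (cnj (z j i)) (V i x) - scaleC (z i j) (V i x)"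
    using ij by (simp add: D_def clinear_diff[OF clinear_Vs] clinear_scaleC[OF clinear_Vs]
        cadjoint_isometry_left_inverse isometry_V Vs_V_commute)
  then have Vs_j: "Vs j D = 0"
    using cnj_z_swap[OF ij] by simp
  have "cinner D D = cinner (V i (V j x)) D - z i j * cinner (V j (V i x)) D"
    by (simp add: D_def cinner_diff_left cinner_scaleC_left)
  also have "\<dots> = 0"
    using ij Vs_i Vs_j by (simp add: cinner_cadjoint isometry_V)
  finally show ?thesis by (simp add: D_def)
qed

lemma Vs_commute:
  assumes "i \<in> I" "j \<in> I" "i \<noteq> j"
  shows "Vs i (Vs j x) = scaleC (cnj (z j i)) (Vs j (Vs i x))"
proof (rule cinner_ext)
  fix u
  have "cinner u (Vs i (Vs j x)) = cinner (V j (V i u)) x"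
    using assms by (simp add: cinner_cadjoint isometry_V)
  also have "\<dots> = cinner (scaleC (z j i) (V i (V j u))) x"
    using assms V_commute[of j i u] by simp
  also have "\<dots> = cinner u (scaleC (cnj (z j i)) (Vs j (Vs i x)))"
    using assms by (simp add: cinner_scaleC_left cinner_scaleC_right cinner_cadjoint isometry_V)
  finally show "cinner u (Vs i (Vs j x)) = cinner u (scaleC (cnj (z j i)) (Vs j (Vs i x)))" .
qed

lemma V_funpow_commute:
  assumes "i \<in> I" "j \<in> I" "i \<noteq> j"
  shows "V i ((V j ^^ r) x) = (V j ^^ r) (scaleC (z i j ^ r) (V i x))"
proof -
  have "V i ((V j ^^ r) x) = scaleC (z i j ^ r) ((V j ^^ r) (V i x))"
    using assms by (intro funpow_commute_scaleC clinear_V V_commute)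
  then show ?thesis
    using assms by (simp add: clinear_scaleC[OF clinear_V_funpow])
qed

lemma Vs_funpow_commute:
  assumes "i \<in> I" "j \<in> I" "i \<noteq> j"
  shows "Vs i ((V j ^^ r) x) = (V j ^^ r) (scaleC (cnj (z i j) ^ r) (Vs i x))"
proof -
  have "Vs i ((V j ^^ r) x) = scaleC (cnj (z i j) ^ r) ((V j ^^ r) (Vs i x))"
    using assms by (intro funpow_commute_scaleC clinear_V Vs_V_commute)
  then show ?thesis
    using assms by (simp add: clinear_scaleC[OF clinear_V_funpow])
qed

lemma V_mem_range_funpow:
  "i \<in> I \<Longrightarrow> j \<in> I \<Longrightarrow> i \<noteq> j \<Longrightarrow> w \<in> range (V j ^^ r) \<Longrightarrow> V i w \<in> range (V j ^^ r)"
  by (auto simp: V_funpow_commute)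

lemma Vs_mem_range_funpow:
  "i \<in> I \<Longrightarrow> j \<in> I \<Longrightarrow> i \<noteq> j \<Longrightarrow> w \<in> range (V j ^^ r) \<Longrightarrow> Vs i w \<in> range (V j ^^ r)"
  by (auto simp: Vs_funpow_commute)

lemma Vs_mem_range_funpow_self:
  "i \<in> I \<Longrightarrow> w \<in> range (V i ^^ Suc r) \<Longrightarrow> Vs i w \<in> range (V i ^^ r)"
  by (auto simp: cadjoint_isometry_left_inverse isometry_V)

lemma V_funpow_Vs_funpow:
  assumes "i \<in> I" shows "w \<in> range (V i ^^ r) \<Longrightarrow> (V i ^^ r) ((Vs i ^^ r) w) = w"
proof (induction r arbitrary: w)
  case (Suc r)
  then obtain y where y: "w = V i ((V i ^^ r) y)" by auto
  then have "Vs i w = (V i ^^ r) y"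
    using assms by (simp add: cadjoint_isometry_left_inverse isometry_V)
  then show ?case
    using Suc.IH[of "Vs i w"] y by (simp add: funpow_swap1)
qed simp

section \<open>Wandering subspaces\<close>

text \<open>\<open>wandering I A\<close> is the \<open>A\<close>-wandering subspace (\<open>wandering_subspace_eq\<close>); the extra
  parameter \<open>T\<close> lets the Wold decomposition proceed one isometry at a time.\<close>

definition wandering :: "nat set \<Rightarrow> nat set \<Rightarrow> 'a set" where
  "wandering T A = {w. (\<forall>i\<in>A. Vs i w = 0) \<and> (\<forall>j\<in>T - A. \<forall>r. w \<in> range (V j ^^ r))}"

lemma V_mem_wandering:
  assumes "j \<in> I" "j \<notin> A" "A \<subseteq> I" "T \<subseteq> I" "w \<in> wandering T A"
  shows "V j w \<in> wandering T A"
proof -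
  have "Vs i (V j w) = 0" if "i \<in> A" for i
  proof -
    have "i \<in> I" "i \<noteq> j" using that assms(2,3) by auto
    then show ?thesis
      using assms that by (simp add: wandering_def Vs_V_commute clinear_zero[OF clinear_V])
  qed
  moreover have "V j w \<in> range (V l ^^ r)" if l: "l \<in> T - A" for l r
  proof (cases "l = j")
    case True
    obtain y where "w = (V j ^^ r) y"
      using assms l True unfolding wandering_def by blast
    then show ?thesis
      using True by (metis funpow_swap1 rangeI)
  next
    case False
    then show ?thesis
      using assms l V_mem_range_funpow[of j l w r] by (auto simp: wandering_def)
  qed
  ultimately show ?thesis
    by (simp add: wandering_def)
qed

lemma Vs_mem_wandering:
  assumes "j \<in> I" "j \<notin> A" "A \<subseteq> I" "T \<subseteq> I" "w \<in> wandering T A"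
  shows "Vs j w \<in> wandering T A"
proof -
  have "Vs i (Vs j w) = 0" if "i \<in> A" for i
  proof -
    have "i \<in> I" "i \<noteq> j" using that assms(2,3) by auto
    then show ?thesis
      using assms that by (simp add: wandering_def Vs_commute clinear_zero[OF clinear_Vs])
  qed
  moreover have "Vs j w \<in> range (V l ^^ r)" if l: "l \<in> T - A" for l r
  proof (cases "l = j")
    case True
    have "w \<in> range (V j ^^ Suc r)"
      using assms l True unfolding wandering_def by blast
    then show ?thesis
      unfolding True using assms(1) by (rule Vs_mem_range_funpow_self[rotated])
  next
    case False
    then show ?thesis
      using assms l Vs_mem_range_funpow[of j l w r] by (auto simp: wandering_def)
  qed
  ultimately show ?thesis
    by (simp add: wandering_def)
qed

lemma V_funpow_mem_wandering:
  "j \<in> I \<Longrightarrow> j \<notin> A \<Longrightarrow> A \<subseteq> I \<Longrightarrow> T \<subseteq> I \<Longrightarrow> w \<in> wandering T A \<Longrightarrow> (V j ^^ r) w \<in> wandering T A"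
  by (induction r) (simp_all add: V_mem_wandering)

lemma Vs_funpow_mem_wandering:
  "j \<in> I \<Longrightarrow> j \<notin> A \<Longrightarrow> A \<subseteq> I \<Longrightarrow> T \<subseteq> I \<Longrightarrow> w \<in> wandering T A \<Longrightarrow> (Vs j ^^ r) w \<in> wandering T A"
  by (induction r) (simp_all add: Vs_mem_wandering)

lemma wandering_eq_Inter:
  "wandering T A = (\<Inter>i\<in>A. {w. Vs i w = 0}) \<inter> (\<Inter>j\<in>T - A. \<Inter>r. range (V j ^^ r))"
  by (auto simp: wandering_def)

lemma csubspace_wandering:
  assumes "A \<subseteq> I" "T \<subseteq> I" shows "csubspace (wandering T A)"
proof -
  have "csubspace {w. Vs i w = 0}" if "i \<in> A" for i
    using that assms by (intro csubspace_kernel clinear_Vs) auto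
  moreover have "csubspace (range (V j ^^ r))" if "j \<in> T - A" for j r
    using that assms by (intro csubspace_range clinear_V_funpow) auto
  ultimately show ?thesis
    unfolding wandering_eq_Inter by (intro csubspace_Int csubspace_INT) auto
qed

lemma closed_wandering:
  assumes "A \<subseteq> I" "T \<subseteq> I" shows "closed (wandering T A)"
proof -
  have "closed {w. Vs i w = 0}" if "i \<in> A" for i
    using that assms by (intro closed_Collect_eq linear_continuous_on bounded_linear_cadjoint
        isometry_V continuous_on_const) auto
  moreover have "closed (range (V j ^^ r))" if "j \<in> T - A" for j r
    using that assms by (intro isometry_closed_range isometry_V_funpow) auto
  ultimately show ?thesis
    unfolding wandering_eq_Inter by (intro closed_Int closed_INT) auto
qed

lemma wandering_in_power_product_range:
  assumes "set L \<subseteq> I - A" "A \<subseteq> I" "w \<in> wandering I A"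
  shows "\<exists>y\<in>wandering I A. w = power_product V m L y"
  using assms
proof (induction L arbitrary: w)
  case (Cons j L)
  then have j: "j \<in> I" "j \<notin> A" by auto
  have "(Vs j ^^ m j) w \<in> wandering I A"
    using Cons.prems j by (intro Vs_funpow_mem_wandering) auto
  moreover have "set L \<subseteq> I - A"
    using Cons.prems by auto
  ultimately obtain y where y: "y \<in> wandering I A" "(Vs j ^^ m j) w = power_product V m L y"
    using Cons.IH Cons.prems(2) by blast
  have "w \<in> range (V j ^^ m j)"
    using Cons.prems j unfolding wandering_def by blast
  then have "w = (V j ^^ m j) ((Vs j ^^ m j) w)"
    using V_funpow_Vs_funpow[OF j(1)] by simp
  then show ?case
    using y by auto
qed auto

lemma wandering_subspace_eq_INT:
  "wandering_subspace n V A =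
    (\<Inter>m\<in>{m. \<forall>j. j \<notin> I - A \<longrightarrow> m j = 0}.
      power_product V m (sorted_list_of_set (I - A)) ` (\<Inter>i\<in>A. {x. Vs i x = 0}))"
  by (simp add: wandering_subspace_def ordered_power_product_eq)

lemma wandering_subspace_subset:
  assumes w: "w \<in> wandering_subspace n V A"
  shows "w \<in> wandering I A"
proof -
  define L where "L = sorted_list_of_set (I - A)"
  have L: "set L = I - A" "distinct L" by (auto simp: L_def)
  have "w \<in> power_product V (\<lambda>_. 0) L ` (\<Inter>i\<in>A. {x. Vs i x = 0})"
    using w unfolding wandering_subspace_eq_INT L_def by blast
  then have "\<forall>i\<in>A. Vs i w = 0"
    by (simp add: power_product_eq_id)
  moreover have "w \<in> range (V j ^^ r)" if j: "j \<in> I - A" for j r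
  proof -
    define m where "m k = (if k = j then r else 0)" for k
    have "w \<in> power_product V m L ` (\<Inter>i\<in>A. {x. Vs i x = 0})"
      using w j unfolding wandering_subspace_eq_INT L_def by (auto simp: m_def)
    moreover have "power_product V m L = V j ^^ r"
      using L j by (subst power_product_single[where j=j]) (auto simp: m_def)
    ultimately show ?thesis by auto
  qed
  ultimately show ?thesis
    by (simp add: wandering_def)
qed

lemma wandering_subspace_eq:
  assumes A: "A \<subseteq> I"
  shows "wandering_subspace n V A = wandering I A"
proof
  show "wandering I A \<subseteq> wandering_subspace n V A"
  proof
    fix w assume w: "w \<in> wandering I A"
    have "w \<in> power_product V m (sorted_list_of_set (I - A)) ` (\<Inter>i\<in>A. {x. Vs i x = 0})" for m
    proof -
      obtain y where "y \<in> wandering I A" "w = power_product V m (sorted_list_of_set (I - A)) y"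
        using wandering_in_power_product_range[OF _ A w, of "sorted_list_of_set (I - A)" m] by auto
      then show ?thesis
        by (auto simp: wandering_def)
    qed
    then show "w \<in> wandering_subspace n V A"
      unfolding wandering_subspace_eq_INT by blast
  qed
qed (use wandering_subspace_subset in blast)

section \<open>Words and their Gram matrix\<close>

lemma isometry_word: "set ls \<subseteq> I \<Longrightarrow> isometry_op (word V ls)"
proof (induction ls)
  case Nil
  have "word V [] = id" by auto
  then show ?case by (simp add: isometry_op_def clinear_op_def)
next
  case (Cons l ls)
  have "isometry_op (V l \<circ> word V ls)"
    using Cons by (intro isometry_comp isometry_V) auto
  moreover have "word V (l # ls) = V l \<circ> word V ls" by auto
  ultimately show ?case by (simp only:)
qed

lemma V_word_commute:
  "j \<in> I \<Longrightarrow> set ls \<subseteq> I \<Longrightarrow> j \<notin> set ls \<Longrightarrow>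
    V j (word V ls x) = scaleC (\<Prod>l\<leftarrow>ls. z j l) (word V ls (V j x))"
proof (induction ls)
  case (Cons l ls)
  then have "V j (word V (l # ls) x) = scaleC (z j l) (V l (V j (word V ls x)))"
    using V_commute[of j l "word V ls x"] by simp
  then show ?case
    using Cons by (simp add: clinear_scaleC[OF clinear_V] scaleC_mult)
qed simp

lemma V_word_insort:
  "l \<in> I \<Longrightarrow> set ms \<subseteq> I \<Longrightarrow>
    V l (word V ms x) = scaleC (insort_coeff z l ms) (word V (insort l ms) x)"
proof (induction ms)
  case (Cons m ms)
  show ?case
  proof (cases "l \<le> m")
    case False
    then have "V l (word V (m # ms) x) = scaleC (z l m) (V m (V l (word V ms x)))"
      using Cons.prems V_commute[of l m "word V ms x"] by simp
    then show ?thesis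
      using Cons False by (simp add: clinear_scaleC[OF clinear_V] scaleC_mult)
  qed simp
qed simp

lemma word_sort: "set ls \<subseteq> I \<Longrightarrow> word V ls x = scaleC (sort_coeff z ls) (word V (sort ls) x)"
proof (induction ls)
  case (Cons l ls)
  have "word V (l # ls) x = scaleC (sort_coeff z ls) (V l (word V (sort ls) x))"
    using Cons by (simp add: clinear_scaleC[OF clinear_V])
  also have "\<dots> = scaleC (sort_coeff z (l # ls)) (word V (sort (l # ls)) x)"
    using Cons.prems by (simp add: V_word_insort scaleC_mult)
  finally show ?case .
qed simp

lemma word_kernel_eq_funpow:
  assumes "i \<in> I" "set ls \<subseteq> I" "Vs i u = 0"
  shows "\<exists>u'. Vs i u' = 0 \<and> word V ls u = (V i ^^ count_list ls i) u'"
  using assms(2)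
proof (induction ls)
  case Nil
  then show ?case using assms(3) by auto
next
  case (Cons l ls)
  then obtain u' where u': "Vs i u' = 0" "word V ls u = (V i ^^ count_list ls i) u'"
    by auto
  show ?case
  proof (cases "l = i")
    case True
    then show ?thesis
      using u' by (auto simp: funpow_swap1)
  next
    case False
    have l: "l \<in> I" using Cons.prems by simp
    let ?u = "scaleC (z l i ^ count_list ls i) (V l u')"
    have "word V (l # ls) u = (V i ^^ count_list (l # ls) i) ?u"
      using u' l assms(1) False by (simp add: V_funpow_commute)
    moreover have "Vs i ?u = 0"
      using u' l assms(1) False
      by (simp add: clinear_scaleC[OF clinear_Vs] Vs_V_commute clinear_zero[OF clinear_V])
    ultimately show ?thesis by blast
  qed
qed

lemma word_mem_range_funpow:
  "i \<in> I \<Longrightarrow> set ls \<subseteq> I \<Longrightarrow> i \<notin> set ls \<Longrightarrow> y \<in> range (V i ^^ s) \<Longrightarrow>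
    word V ls y \<in> range (V i ^^ s)"
  by (induction ls) (auto intro: V_mem_range_funpow)

lemma cinner_word_range_funpow:
  assumes i: "i \<in> I" and "Vs i w = 0" "set ls \<subseteq> I"
    and y: "y \<in> range (V i ^^ Suc (count_list ls i))"
  shows "cinner (word V ls w) y = 0"
proof -
  obtain u where u: "Vs i u = 0" "word V ls w = (V i ^^ count_list ls i) u"
    using word_kernel_eq_funpow[OF i assms(3,2)] by blast
  obtain v where "y = (V i ^^ count_list ls i) (V i v)"
    using y by (auto simp: funpow_swap1)
  then have "cinner (word V ls w) y = cinner u (V i v)"
    using u(2) isometry_cinner[OF isometry_V_funpow[OF i]] by simp
  also have "\<dots> = 0"
    using u(1) cinner_cadjoint'[OF isometry_V[OF i]] by simp
  finally show ?thesis .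
qed

lemma cinner_word_eq_0_if_not_subset:
  assumes "A \<subseteq> I" "B \<subseteq> I" "w \<in> wandering I A" "w' \<in> wandering I B"
    and "set ls \<subseteq> A" "set ls' \<subseteq> B" and i: "i \<in> A" "i \<notin> B"
  shows "cinner (word V ls w) (word V ls' w') = 0"
proof -
  have "i \<in> I" using assms by auto
  have "w' \<in> range (V i ^^ Suc (count_list ls i))"
    using assms \<open>i \<in> I\<close> unfolding wandering_def by blast
  then have "word V ls' w' \<in> range (V i ^^ Suc (count_list ls i))"
    using assms by (intro word_mem_range_funpow \<open>i \<in> I\<close>) auto
  moreover have "Vs i w = 0"
    using assms unfolding wandering_def by blast
  ultimately show ?thesis
    using assms by (intro cinner_word_range_funpow[OF \<open>i \<in> I\<close>]) auto
qed

lemma cinner_word_eq_0_if_count_less: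
  assumes "A \<subseteq> I" "w \<in> wandering I A" "w' \<in> wandering I A"
    and ls: "set ls \<subseteq> A" "set ls' \<subseteq> A" and i: "count_list ls i < count_list ls' i"
  shows "cinner (word V ls w) (word V ls' w') = 0"
proof -
  have "i \<in> set ls'"
    using i by (metis count_notin less_nat_zero_code)
  then have "i \<in> A" "i \<in> I" using assms by auto
  then have "Vs i w = 0" "Vs i w' = 0"
    using assms unfolding wandering_def by blast+
  then obtain u where "word V ls' w' = (V i ^^ count_list ls' i) u"
    using word_kernel_eq_funpow[OF \<open>i \<in> I\<close>, of ls' w'] ls assms(1) by auto
  then have "word V ls' w' \<in> range (V i ^^ Suc (count_list ls i))"
    using i funpow_mem_range_funpow[of "Suc (count_list ls i)" "count_list ls' i" "V i"] by simp
  then show ?thesis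
    using \<open>Vs i w = 0\<close> ls assms(1) by (intro cinner_word_range_funpow[OF \<open>i \<in> I\<close>]) auto
qed

lemma cinner_word:
  assumes AB: "A \<subseteq> I" "B \<subseteq> I" and w: "w \<in> wandering I A" "w' \<in> wandering I B"
    and ls: "set ls \<subseteq> A" "set ls' \<subseteq> B"
  shows "cinner (word V ls w) (word V ls' w') =
    (if A = B \<and> mset ls = mset ls' then sort_coeff z ls * cnj (sort_coeff z ls') * cinner w w' else 0)"
proof (cases "A = B \<and> mset ls = mset ls'")
  case True
  have I: "set ls \<subseteq> I" "set ls' \<subseteq> I" using ls AB by auto
  have "sort ls' = sort ls" using True by (intro properties_for_sort) auto
  then have "cinner (word V ls w) (word V ls' w') =
      cinner (scaleC (sort_coeff z ls) (word V (sort ls) w)) (scaleC (sort_coeff z ls') (word V (sort ls) w'))"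
    using word_sort[OF I(1), of w] word_sort[OF I(2), of w'] by simp
  also have "\<dots> = sort_coeff z ls * cnj (sort_coeff z ls') * cinner w w'"
    using I by (simp add: cinner_scaleC_left cinner_scaleC_right isometry_cinner isometry_word)
  finally show ?thesis using True by simp
next
  case False
  have "cinner (word V ls w) (word V ls' w') = 0 \<or> cinner (word V ls' w') (word V ls w) = 0"
  proof (cases "A = B")
    case True
    then obtain i where "count_list ls i < count_list ls' i \<or> count_list ls' i < count_list ls i"
      using False by (metis count_mset multiset_eqI nat_neq_iff)
    then show ?thesis
      using True assms cinner_word_eq_0_if_count_less by metis
  next
    case False
    then obtain i where "i \<in> A \<and> i \<notin> B \<or> i \<in> B \<and> i \<notin> A"
      by blast
    then show ?thesis
      using assms cinner_word_eq_0_if_not_subset by metis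
  qed
  then show ?thesis
    using False cinner_commute[of "word V ls w" "word V ls' w'"] by auto
qed

section \<open>Density of words\<close>

definition word_vectors :: "nat set \<Rightarrow> 'a set" where
  "word_vectors T = {word V ls y | A ls y. A \<subseteq> T \<and> set ls \<subseteq> A \<and> y \<in> wandering T A}"

lemma cinner_V_funpow: "i \<in> I \<Longrightarrow> cinner u ((V i ^^ k) v) = cinner ((Vs i ^^ k) u) v"
proof (induction k arbitrary: u)
  case (Suc k)
  have "cinner u ((V i ^^ Suc k) v) = cinner (Vs i u) ((V i ^^ k) v)"
    using cinner_cadjoint'[OF isometry_V[OF Suc.prems]] by simp
  also have "\<dots> = cinner ((Vs i ^^ Suc k) u) v"
    using Suc by (simp add: funpow_swap1)
  finally show ?case .
qed simp

text \<open>\<open>V\<^sub>i\<^sup>m V\<^sub>i\<^sup>*\<^sup>m\<close> is the orthogonal projection onto the range of \<open>V\<^sub>i\<^sup>m\<close>.\<close>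

lemma norm_diff_shift_projections:
  assumes i: "i \<in> I" and "m \<le> m'"
  shows "(norm ((V i ^^ m) ((Vs i ^^ m) y) - (V i ^^ m') ((Vs i ^^ m') y)))\<^sup>2 =
    (norm ((Vs i ^^ m) y))\<^sup>2 - (norm ((Vs i ^^ m') y))\<^sup>2"
proof -
  define P where "P k = (V i ^^ k) ((Vs i ^^ k) y)" for k
  obtain k where m': "m' = m + k" using \<open>m \<le> m'\<close> le_Suc_ex by blast
  have "cinner (P m) (P m') = cinner ((Vs i ^^ m) y) ((V i ^^ k) ((Vs i ^^ m') y))"
    unfolding P_def m' funpow_add o_apply by (rule isometry_cinner[OF isometry_V_funpow[OF i]])
  also have "\<dots> = cinner ((Vs i ^^ m') y) ((Vs i ^^ m') y)"
    by (simp add: cinner_V_funpow[OF i] m' funpow_add add.commute)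
  finally have "cinner (P m) (P m') = (norm ((Vs i ^^ m') y))\<^sup>2"
    by (simp add: cinner_self)
  moreover have "norm (P k) = norm ((Vs i ^^ k) y)" for k
    by (simp add: P_def isometry_norm[OF isometry_V_funpow[OF i]])
  moreover have "(norm (P m - P m'))\<^sup>2 =
      (norm (P m))\<^sup>2 - Re (cinner (P m) (P m')) - Re (cinner (P m') (P m)) + (norm (P m'))\<^sup>2"
    unfolding power2_norm_eq_inner by (simp add: inner_diff_left inner_diff_right cinner_def)
  ultimately have "(norm (P m - P m'))\<^sup>2 = (norm ((Vs i ^^ m) y))\<^sup>2 - (norm ((Vs i ^^ m') y))\<^sup>2"
    using cinner_commute[of "P m'" "P m"] by simp
  then show ?thesis by (simp add: P_def)
qed

lemma Cauchy_shift_projections: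
  assumes i: "i \<in> I"
  shows "Cauchy (\<lambda>m. (V i ^^ m) ((Vs i ^^ m) y))"
proof (rule metric_CauchyI)
  define a where "a m = (norm ((Vs i ^^ m) y))\<^sup>2" for m
  have "decseq a"
    unfolding a_def using norm_cadjoint_le[OF isometry_V[OF i]]
    by (intro decseq_SucI power_mono) auto
  moreover obtain L where "a \<longlonglongrightarrow> L"
    using decseq_convergent[OF \<open>decseq a\<close>, of 0] by (auto simp: a_def)
  then have "Cauchy a" by (rule LIMSEQ_imp_Cauchy)
  fix e :: real assume "e > 0"
  then have "e\<^sup>2 > 0" by simp
  then obtain N where N: "\<forall>m\<ge>N. \<forall>m'\<ge>N. dist (a m) (a m') < e\<^sup>2"
    using \<open>Cauchy a\<close> unfolding Cauchy_def by blast
  have "dist ((V i ^^ m) ((Vs i ^^ m) y)) ((V i ^^ m') ((Vs i ^^ m') y)) < e"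
    if "N \<le> m" "N \<le> m'" for m m'
  proof -
    have "(dist ((V i ^^ m) ((Vs i ^^ m) y)) ((V i ^^ m') ((Vs i ^^ m') y)))\<^sup>2 \<le> dist (a m) (a m')"
    proof (cases "m \<le> m'")
      case True
      then show ?thesis
        using norm_diff_shift_projections[OF i True, of y] by (simp add: a_def dist_norm dist_real_def)
    next
      case False
      then show ?thesis
        using norm_diff_shift_projections[OF i, of m' m y]
        by (simp add: a_def dist_norm dist_real_def norm_minus_commute)
    qed
    also have "\<dots> < e\<^sup>2"
      using N that by blast
    finally show ?thesis
      using \<open>e > 0\<close> by (simp add: power_less_imp_less_base)
  qed
  then show "\<exists>N. \<forall>m\<ge>N. \<forall>m'\<ge>N. dist ((V i ^^ m) ((Vs i ^^ m) y)) ((V i ^^ m') ((Vs i ^^ m') y)) < e"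
    by blast
qed

lemma shift_projections_limit:
  assumes i: "i \<in> I" "i \<notin> T" and T: "T \<subseteq> I" "A \<subseteq> T" and y: "y \<in> wandering T A"
  obtains y' where "y' \<in> wandering (insert i T) A" "(\<lambda>m. (V i ^^ m) ((Vs i ^^ m) y)) \<longlonglongrightarrow> y'"
proof -
  obtain y' where lim: "(\<lambda>m. (V i ^^ m) ((Vs i ^^ m) y)) \<longlonglongrightarrow> y'"
    using Cauchy_shift_projections[OF i(1)] Cauchy_convergent_iff convergent_def by blast
  have A: "i \<notin> A" "A \<subseteq> I" using i T by auto
  have "\<forall>m. (V i ^^ m) ((Vs i ^^ m) y) \<in> wandering T A"
    using i T y A by (intro allI V_funpow_mem_wandering Vs_funpow_mem_wandering) auto
  then have "y' \<in> wandering T A"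
    using closed_sequentially[OF closed_wandering[OF A(2) T(1)] _ lim] by blast
  moreover have "y' \<in> range (V i ^^ r)" for r
  proof -
    have "(\<lambda>m. (V i ^^ (m + r)) ((Vs i ^^ (m + r)) y)) \<longlonglongrightarrow> y'"
      using lim by (rule LIMSEQ_ignore_initial_segment)
    then show ?thesis
      by (rule closed_sequentially[OF isometry_closed_range[OF isometry_V_funpow[OF i(1)]], rotated])
        (simp add: funpow_mem_range_funpow)
  qed
  ultimately have "y' \<in> wandering (insert i T) A"
    by (auto simp: wandering_def)
  then show thesis
    using that lim by blast
qed

lemma shift_telescope:
  assumes "i \<in> I"
  shows "y = (V i ^^ m) ((Vs i ^^ m) y) +
    (\<Sum>r<m. (V i ^^ r) ((Vs i ^^ r) y - V i (Vs i ((Vs i ^^ r) y))))"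
proof (induction m)
  case (Suc m)
  have "(V i ^^ m) ((Vs i ^^ m) y - V i (Vs i ((Vs i ^^ m) y))) =
      (V i ^^ m) ((Vs i ^^ m) y) - (V i ^^ Suc m) ((Vs i ^^ Suc m) y)"
    by (simp add: clinear_diff[OF clinear_V_funpow[OF assms]] funpow_swap1)
  then show ?case
    using Suc by (simp add: ac_simps)
qed simp

lemma defect_mem_wandering:
  assumes "i \<in> I" "i \<notin> T" "T \<subseteq> I" "A \<subseteq> T" "v \<in> wandering T A"
  shows "v - V i (Vs i v) \<in> wandering (insert i T) (insert i A)"
proof -
  have "i \<notin> A" "A \<subseteq> I" using assms by auto
  then have "v - V i (Vs i v) \<in> wandering T A"
    using assms by (intro csubspace_diff[OF csubspace_wandering] V_mem_wandering Vs_mem_wandering) auto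
  moreover have "Vs i (v - V i (Vs i v)) = 0"
    using assms(1) by (simp add: clinear_diff[OF clinear_Vs] cadjoint_isometry_left_inverse isometry_V)
  ultimately show ?thesis
    using \<open>i \<notin> A\<close> by (auto simp: wandering_def)
qed

lemma word_defect_mem_word_vectors:
  assumes i: "i \<in> I" "i \<notin> T" and T: "T \<subseteq> I" "A \<subseteq> T"
    and ls: "set ls \<subseteq> A" and y: "y \<in> wandering T A"
  shows "word V ls ((V i ^^ r) ((Vs i ^^ r) y - V i (Vs i ((Vs i ^^ r) y)))) \<in> word_vectors (insert i T)"
proof -
  have "(Vs i ^^ r) y - V i (Vs i ((Vs i ^^ r) y)) \<in> wandering (insert i T) (insert i A)"
    using i T y by (intro defect_mem_wandering Vs_funpow_mem_wandering) auto
  moreover have "set (ls @ replicate r i) \<subseteq> insert i A" "insert i A \<subseteq> insert i T"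
    using ls T by auto
  ultimately have "word V (ls @ replicate r i) ((Vs i ^^ r) y - V i (Vs i ((Vs i ^^ r) y)))
      \<in> word_vectors (insert i T)"
    unfolding word_vectors_def by blast
  then show ?thesis
    by (simp add: word_append word_replicate)
qed

lemma word_mem_closed_cspan_insert:
  assumes i: "i \<in> I" "i \<notin> T" and T: "T \<subseteq> I" "A \<subseteq> T"
    and ls: "set ls \<subseteq> A" and y: "y \<in> wandering T A"
  shows "word V ls y \<in> closed_cspan (word_vectors (insert i T))"
proof -
  define M where "M = closed_cspan (word_vectors (insert i T))"
  have M: "closed M" "csubspace M" "word_vectors (insert i T) \<subseteq> M"
    by (simp_all add: M_def closed_closed_cspan csubspace_closed_cspan closed_cspan_superset)
  obtain y' where y': "y' \<in> wandering (insert i T) A"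
    and lim: "(\<lambda>m. (V i ^^ m) ((Vs i ^^ m) y)) \<longlonglongrightarrow> y'"
    using shift_projections_limit[OF i T y] by blast
  define d where "d r = (Vs i ^^ r) y - V i (Vs i ((Vs i ^^ r) y))" for r
  have "word V ls y' \<in> word_vectors (insert i T)"
    unfolding word_vectors_def using y' ls T by blast
  moreover have "word V ls ((V i ^^ r) (d r)) \<in> word_vectors (insert i T)" for r
    unfolding d_def by (rule word_defect_mem_word_vectors[OF i T ls y])
  ultimately have partial_sums: "word V ls y' + (\<Sum>r<m. word V ls ((V i ^^ r) (d r))) \<in> M" for m
    using M by (intro csubspace_add csubspace_sum) auto
  have word: "clinear_op (word V ls)" "bounded_linear (word V ls)"
    using isometry_word ls T by (auto simp: isometry_clinear isometry_bounded_linear)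
  have "word V ls y = word V ls ((V i ^^ m) ((Vs i ^^ m) y)) + (\<Sum>r<m. word V ls ((V i ^^ r) (d r)))" for m
    using arg_cong[OF shift_telescope[OF i(1), of y m], of "word V ls"]
    by (simp add: d_def clinear_add[OF word(1)] clinear_sum[OF word(1)])
  then have "word V ls y' + (\<Sum>r<m. word V ls ((V i ^^ r) (d r))) =
      word V ls y' + (word V ls y - word V ls ((V i ^^ m) ((Vs i ^^ m) y)))" for m
    by (simp add: algebra_simps)
  moreover have "(\<lambda>m. word V ls y' + (word V ls y - word V ls ((V i ^^ m) ((Vs i ^^ m) y))))
      \<longlonglongrightarrow> word V ls y' + (word V ls y - word V ls y')"
    by (intro tendsto_intros bounded_linear.tendsto[OF word(2)] lim)
  ultimately have "(\<lambda>m. word V ls y' + (\<Sum>r<m. word V ls ((V i ^^ r) (d r)))) \<longlonglongrightarrow> word V ls y"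
    by simp
  then have "word V ls y \<in> M"
    by (rule closed_sequentially[OF M(1) partial_sums])
  then show ?thesis
    unfolding M_def .
qed

lemma closed_cspan_word_vectors_upto: "k \<le> n \<Longrightarrow> closed_cspan (word_vectors {1..k}) = UNIV"
proof (induction k)
  case 0
  have "y \<in> word_vectors {1..0}" for y
    unfolding word_vectors_def wandering_def by (intro CollectI exI[of _ "{}"] exI[of _ "[]"]) auto
  then show ?case
    using closed_cspan_superset[of "word_vectors {1..0}"] by blast
next
  case (Suc k)
  have "x \<in> closed_cspan (word_vectors {1..Suc k})" if x: "x \<in> word_vectors {1..k}" for x
  proof -
    obtain A ls y where "x = word V ls y" "A \<subseteq> {1..k}" "set ls \<subseteq> A" "y \<in> wandering {1..k} A"
      using x unfolding word_vectors_def by blast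
    moreover have "insert (Suc k) {1..k} = {1..Suc k}" by auto
    ultimately show ?thesis
      using word_mem_closed_cspan_insert[of "Suc k" "{1..k}" A ls y] Suc.prems by auto
  qed
  then have "closed_cspan (word_vectors {1..k}) \<subseteq> closed_cspan (word_vectors {1..Suc k})"
    by (intro closed_cspan_least closed_closed_cspan csubspace_closed_cspan subsetI)
  then show ?case
    using Suc by auto
qed

lemma closed_cspan_word_vectors: "closed_cspan (word_vectors I) = UNIV"
  using closed_cspan_word_vectors_upto[of n] by simp

end

section \<open>Unitary equivalence\<close>

lemma intertwine_cadjoint:
  assumes T: "isometry_op T" "isometry_op T'" and "surj \<phi>"
    and \<phi>: "\<And>x y. cinner (\<phi> x) (\<phi> y) = cinner x y" "\<And>x. \<phi> (T x) = T' (\<phi> x)"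
  shows "\<phi> (cadjoint T x) = cadjoint T' (\<phi> x)"
proof (rule cinner_ext)
  fix u
  obtain u0 where u0: "u = \<phi> u0" using \<open>surj \<phi>\<close> by blast
  have "cinner u (\<phi> (cadjoint T x)) = cinner (T u0) x"
    by (simp add: u0 \<phi>(1) cinner_cadjoint[OF T(1)])
  also have "\<dots> = cinner u (cadjoint T' (\<phi> x))"
    by (simp add: u0 \<phi> cinner_cadjoint[OF T(2), symmetric] flip: \<phi>(1))
  finally show "cinner u (\<phi> (cadjoint T x)) = cinner u (cadjoint T' (\<phi> x))" .
qed

lemma bij_intertwine_mem_range_iff:
  assumes "bij \<phi>" "\<And>x. \<phi> (T x) = T' (\<phi> x)"
  shows "w \<in> range T \<longleftrightarrow> \<phi> w \<in> range T'"
proof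
  assume "\<phi> w \<in> range T'"
  then obtain y where "\<phi> w = T' (\<phi> y)"
    using bij_is_surj[OF assms(1)] by (metis rangeE surj_f_inv_f)
  then have "w = T y"
    using assms by (metis bij_is_inj injD)
  then show "w \<in> range T" by simp
qed (use assms(2) in auto)

locale doubly_noncommuting_pair = src: doubly_noncommuting_tuple n z V + tgt: doubly_noncommuting_tuple n z V'
  for n z and V :: "nat \<Rightarrow> 'a::complex_hilbert_space \<Rightarrow> 'a" and V' :: "nat \<Rightarrow> 'b::complex_hilbert_space \<Rightarrow> 'b"
begin

lemma unitarily_equivalent_wandering_data_iff:
  assumes "A \<subseteq> src.I"
  shows "unitarily_equivalent (wandering_subspace n V A) (wandering_subspace n V' A)
      (wandering_index n A) (wandering_data V) (wandering_data V') \<longleftrightarrow>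
    unitarily_equivalent (src.wandering src.I A) (tgt.wandering src.I A) (src.I - A) V V'"
  unfolding src.wandering_subspace_eq[OF assms] tgt.wandering_subspace_eq[OF assms]
  by (simp add: unitarily_equivalent_def wandering_index_def wandering_data_def)

lemma unitary_image_wandering:
  assumes \<phi>: "bij \<phi>" "clinear_op \<phi>" "\<And>x y. cinner (\<phi> x) (\<phi> y) = cinner x y"
    "\<And>i x. i \<in> src.I \<Longrightarrow> \<phi> (V i x) = V' i (\<phi> x)"
    and "A \<subseteq> src.I" "T \<subseteq> src.I"
  shows "\<phi> ` src.wandering T A = tgt.wandering T A"
proof -
  have kernel: "src.Vs i w = 0 \<longleftrightarrow> tgt.Vs i (\<phi> w) = 0" if "i \<in> src.I" for i w
  proof -
    have "\<phi> (src.Vs i w) = tgt.Vs i (\<phi> w)"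
      using src.isometry_V[OF that] tgt.isometry_V[OF that] bij_is_surj[OF \<phi>(1)] \<phi>(3) \<phi>(4)[OF that]
      by (rule intertwine_cadjoint)
    then show ?thesis
      using bij_is_inj[OF \<phi>(1)] clinear_zero[OF \<phi>(2)] by (metis injD)
  qed
  have funpow: "\<phi> ((V j ^^ r) x) = (V' j ^^ r) (\<phi> x)" if "j \<in> src.I" for j r x
    by (induction r) (simp_all add: \<phi>(4)[OF that])
  have range: "w \<in> range (V j ^^ r) \<longleftrightarrow> \<phi> w \<in> range (V' j ^^ r)" if "j \<in> src.I" for j r w
    using \<phi>(1) funpow[OF that] by (rule bij_intertwine_mem_range_iff)
  have "w \<in> src.wandering T A \<longleftrightarrow> \<phi> w \<in> tgt.wandering T A" for w
  proof -
    have "(\<forall>i\<in>A. src.Vs i w = 0) \<longleftrightarrow> (\<forall>i\<in>A. tgt.Vs i (\<phi> w) = 0)"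
      using kernel assms(5) by blast
    moreover have "(\<forall>j\<in>T - A. \<forall>r. w \<in> range (V j ^^ r)) \<longleftrightarrow> (\<forall>j\<in>T - A. \<forall>r. \<phi> w \<in> range (V' j ^^ r))"
      using range assms(6) by blast
    ultimately show ?thesis
      unfolding src.wandering_def tgt.wandering_def by simp
  qed
  then have "src.wandering T A = \<phi> -` tgt.wandering T A"
    by blast
  then show ?thesis
    using bij_is_surj[OF \<phi>(1)] by (simp add: surj_image_vimage_eq)
qed

lemma unitarily_equivalent_restrict_wandering:
  assumes "unitarily_equivalent UNIV UNIV src.I V V'" "A \<subseteq> src.I"
  shows "unitarily_equivalent (src.wandering src.I A) (tgt.wandering src.I A) (src.I - A) V V'"
proof -
  obtain \<phi> where \<phi>: "bij \<phi>" "\<And>x y. \<phi> (x + y) = \<phi> x + \<phi> y" "\<And>c x. \<phi> (scaleC c x) = scaleC c (\<phi> x)"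
    "\<And>x y. cinner (\<phi> x) (\<phi> y) = cinner x y" "\<And>i x. i \<in> src.I \<Longrightarrow> \<phi> (V i x) = V' i (\<phi> x)"
    using assms(1) unfolding unitarily_equivalent_def by blast
  have "clinear_op \<phi>"
    using \<phi>(2,3) by (simp add: clinear_op_def)
  then have "\<phi> ` src.wandering src.I A = tgt.wandering src.I A"
    using \<phi>(1,4,5) assms(2) by (intro unitary_image_wandering) auto
  then have "bij_betw \<phi> (src.wandering src.I A) (tgt.wandering src.I A)"
    by (intro bij_betw_subset[OF \<phi>(1)]) auto
  then show ?thesis
    unfolding unitarily_equivalent_def by (intro exI[of _ \<phi>] conjI ballI allI) (simp_all add: \<phi>)
qed

end

locale wandering_unitaries = doubly_noncommuting_pair +
  fixes \<Phi> :: "nat set \<Rightarrow> 'a \<Rightarrow> 'b"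
  assumes \<Phi>_bij: "A \<subseteq> src.I \<Longrightarrow> bij_betw (\<Phi> A) (src.wandering src.I A) (tgt.wandering src.I A)"
    and \<Phi>_cinner: "A \<subseteq> src.I \<Longrightarrow> x \<in> src.wandering src.I A \<Longrightarrow> y \<in> src.wandering src.I A \<Longrightarrow>
      cinner (\<Phi> A x) (\<Phi> A y) = cinner x y"
    and \<Phi>_intertwines: "A \<subseteq> src.I \<Longrightarrow> j \<in> src.I - A \<Longrightarrow> x \<in> src.wandering src.I A \<Longrightarrow>
      \<Phi> A (V j x) = V' j (\<Phi> A x)"
begin

definition word_index :: "(nat set \<times> nat list \<times> 'a) set" where
  "word_index = {(A, ls, w). A \<subseteq> src.I \<and> set ls \<subseteq> A \<and> w \<in> src.wandering src.I A}"

definition src_word :: "nat set \<times> nat list \<times> 'a \<Rightarrow> 'a" where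
  "src_word = (\<lambda>(A, ls, w). word V ls w)"

definition tgt_word :: "nat set \<times> nat list \<times> 'a \<Rightarrow> 'b" where
  "tgt_word = (\<lambda>(A, ls, w). word V' ls (\<Phi> A w))"

lemma \<Phi>_mem_wandering: "A \<subseteq> src.I \<Longrightarrow> w \<in> src.wandering src.I A \<Longrightarrow> \<Phi> A w \<in> tgt.wandering src.I A"
  using \<Phi>_bij bij_betwE by blast

lemma cinner_tgt_word:
  assumes "a \<in> word_index" "b \<in> word_index"
  shows "cinner (tgt_word a) (tgt_word b) = cinner (src_word a) (src_word b)"
proof -
  obtain A ls w B ls' w' where a: "a = (A, ls, w)" "A \<subseteq> src.I" "set ls \<subseteq> A" "w \<in> src.wandering src.I A"
    and b: "b = (B, ls', w')" "B \<subseteq> src.I" "set ls' \<subseteq> B" "w' \<in> src.wandering src.I B"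
    using assms unfolding word_index_def by blast
  show ?thesis
    unfolding a(1) b(1) src_word_def tgt_word_def
    using src.cinner_word[OF a(2) b(2) a(4) b(4) a(3) b(3)]
      tgt.cinner_word[OF a(2) b(2) \<Phi>_mem_wandering[OF a(2,4)] \<Phi>_mem_wandering[OF b(2,4)] a(3) b(3)]
      \<Phi>_cinner[OF a(2,4)] b(4)
    by auto
qed

lemma closed_cspan_src_word: "closed_cspan (src_word ` word_index) = UNIV"
proof -
  have "src.word_vectors src.I \<subseteq> src_word ` word_index"
  proof
    fix x assume "x \<in> src.word_vectors src.I"
    then obtain A ls w where "x = word V ls w" "(A, ls, w) \<in> word_index"
      unfolding src.word_vectors_def word_index_def by blast
    then show "x \<in> src_word ` word_index"
      by (intro image_eqI[where x="(A, ls, w)"]) (simp_all add: src_word_def)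
  qed
  then show ?thesis
    using closed_cspan_eq_UNIV_mono src.closed_cspan_word_vectors by blast
qed

lemma closed_cspan_tgt_word: "closed_cspan (tgt_word ` word_index) = UNIV"
proof -
  have "tgt.word_vectors src.I \<subseteq> tgt_word ` word_index"
  proof
    fix x assume "x \<in> tgt.word_vectors src.I"
    then obtain A ls y where x: "x = word V' ls y" "A \<subseteq> src.I" "set ls \<subseteq> A" "y \<in> tgt.wandering src.I A"
      unfolding tgt.word_vectors_def by blast
    moreover have "\<Phi> A ` src.wandering src.I A = tgt.wandering src.I A"
      using \<Phi>_bij[OF x(2)] by (simp add: bij_betw_def)
    ultimately obtain w where "w \<in> src.wandering src.I A" "y = \<Phi> A w"
      by blast
    then have "x = tgt_word (A, ls, w)" "(A, ls, w) \<in> word_index"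
      using x by (simp_all add: tgt_word_def word_index_def)
    then show "x \<in> tgt_word ` word_index"
      by blast
  qed
  then show ?thesis
    using closed_cspan_eq_UNIV_mono tgt.closed_cspan_word_vectors by blast
qed

lemma V_word_index:
  assumes "a \<in> word_index" "j \<in> src.I"
  obtains c b where "b \<in> word_index" "V j (src_word a) = scaleC c (src_word b)"
    "V' j (tgt_word a) = scaleC c (tgt_word b)"
proof -
  obtain A ls w where a: "a = (A, ls, w)" "A \<subseteq> src.I" "set ls \<subseteq> A" "w \<in> src.wandering src.I A"
    using assms unfolding word_index_def by blast
  show thesis
  proof (cases "j \<in> A")
    case True
    then have "(A, j # ls, w) \<in> word_index"
      using a unfolding word_index_def by auto
    then show thesis
      by (rule that[of _ 1]) (simp_all add: a(1) src_word_def tgt_word_def)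
  next
    case False
    have ls: "set ls \<subseteq> src.I" "j \<notin> set ls"
      using a False by auto
    have "(A, ls, V j w) \<in> word_index"
      using a src.V_mem_wandering[OF assms(2) False a(2) order_refl a(4)]
      unfolding word_index_def by blast
    moreover have "V j (src_word a) = scaleC (\<Prod>l\<leftarrow>ls. z j l) (src_word (A, ls, V j w))"
      using src.V_word_commute[OF assms(2) ls] by (simp add: a(1) src_word_def)
    moreover have "V' j (tgt_word a) = scaleC (\<Prod>l\<leftarrow>ls. z j l) (tgt_word (A, ls, V j w))"
      using tgt.V_word_commute[OF assms(2) ls] \<Phi>_intertwines[OF a(2) _ a(4), of j] False assms(2)
      by (simp add: a(1) tgt_word_def)
    ultimately show thesis
      by (rule that)
  qed
qed

theorem unitarily_equivalent_tuples: "unitarily_equivalent UNIV UNIV src.I V V'"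
proof -
  obtain \<phi> where \<phi>: "bij \<phi>" "clinear_op \<phi>" "\<And>x y. cinner (\<phi> x) (\<phi> y) = cinner x y"
    "\<And>a. a \<in> word_index \<Longrightarrow> \<phi> (src_word a) = tgt_word a"
    using unitary_extension[OF cinner_tgt_word[symmetric] closed_cspan_src_word closed_cspan_tgt_word]
    by blast
  have "bounded_linear \<phi>"
    by (rule bounded_linear_if_clinear[OF \<phi>(2), where K=1])
      (simp add: norm_eq_if_cinner_self_eq[OF \<phi>(3)])
  have "\<phi> (V j x) = V' j (\<phi> x)" if j: "j \<in> src.I" for j x
  proof (rule clinear_eq_closed_cspan_UNIV[OF closed_cspan_src_word, where f="\<lambda>x. \<phi> (V j x)" and h="\<lambda>x. V' j (\<phi> x)"])
    show "bounded_linear (\<lambda>x. \<phi> (V j x))" "bounded_linear (\<lambda>x. V' j (\<phi> x))"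
      using \<open>bounded_linear \<phi>\<close> isometry_bounded_linear[OF src.isometry_V[OF j]]
        isometry_bounded_linear[OF tgt.isometry_V[OF j]]
      by (simp_all add: bounded_linear_compose)
    show "clinear_op (\<lambda>x. \<phi> (V j x))" "clinear_op (\<lambda>x. V' j (\<phi> x))"
      using \<phi>(2) src.clinear_V[OF j] tgt.clinear_V[OF j] by (simp_all add: clinear_op_def)
    fix y assume "y \<in> src_word ` word_index"
    then obtain a where a: "a \<in> word_index" "y = src_word a" by blast
    then obtain c b where "b \<in> word_index" "V j (src_word a) = scaleC c (src_word b)"
      "V' j (tgt_word a) = scaleC c (tgt_word b)"
      using V_word_index j by blast
    then show "\<phi> (V j y) = V' j (\<phi> y)"
      using a \<phi>(4) by (simp add: clinear_scaleC[OF \<phi>(2)])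
  qed
  then show ?thesis
    unfolding unitarily_equivalent_def
    by (intro exI[of _ \<phi>] conjI ballI allI) (simp_all add: \<phi> clinear_add clinear_scaleC)
qed

end

context doubly_noncommuting_pair
begin

theorem unitarily_equivalent_iff_wandering:
  "unitarily_equivalent UNIV UNIV src.I V V' \<longleftrightarrow>
    (\<forall>A. A \<subseteq> src.I \<longrightarrow>
      unitarily_equivalent (src.wandering src.I A) (tgt.wandering src.I A) (src.I - A) V V')"
    (is "_ \<longleftrightarrow> (\<forall>A. A \<subseteq> src.I \<longrightarrow> ?equiv A)")
proof
  assume equiv: "\<forall>A. A \<subseteq> src.I \<longrightarrow> ?equiv A"
  define Q where "Q A \<phi> \<longleftrightarrow> A \<subseteq> src.I \<longrightarrow>
    bij_betw \<phi> (src.wandering src.I A) (tgt.wandering src.I A) \<and>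
    (\<forall>x\<in>src.wandering src.I A. \<forall>y\<in>src.wandering src.I A. cinner (\<phi> x) (\<phi> y) = cinner x y) \<and>
    (\<forall>j\<in>src.I - A. \<forall>x\<in>src.wandering src.I A. \<phi> (V j x) = V' j (\<phi> x))" for A \<phi>
  have "\<exists>\<phi>. Q A \<phi>" for A
  proof (cases "A \<subseteq> src.I")
    case True
    then have "?equiv A"
      using equiv by blast
    then obtain \<phi> where "bij_betw \<phi> (src.wandering src.I A) (tgt.wandering src.I A)"
      "\<forall>x\<in>src.wandering src.I A. \<forall>y\<in>src.wandering src.I A. cinner (\<phi> x) (\<phi> y) = cinner x y"
      "\<forall>j\<in>src.I - A. \<forall>x\<in>src.wandering src.I A. \<phi> (V j x) = V' j (\<phi> x)"
      unfolding unitarily_equivalent_def by (elim exE conjE) blast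
    then show ?thesis
      unfolding Q_def by blast
  qed (simp add: Q_def)
  then have "\<exists>\<Phi>. \<forall>A. Q A (\<Phi> A)"
    by (rule choice[OF allI])
  then obtain \<Phi> where "Q A (\<Phi> A)" for A
    by blast
  then interpret wandering_unitaries n z V V' \<Phi>
    by unfold_locales (simp_all add: Q_def)
  show "unitarily_equivalent UNIV UNIV src.I V V'"
    by (rule unitarily_equivalent_tuples)
qed (use unitarily_equivalent_restrict_wandering in blast)

end

theorem theorem5p2:
  fixes n :: nat
    and z :: "nat \<Rightarrow> nat \<Rightarrow> complex"
    and V :: "nat \<Rightarrow> 'a::complex_hilbert_space \<Rightarrow> 'a"
    and V' :: "nat \<Rightarrow> 'b::complex_hilbert_space \<Rightarrow> 'b"
  assumes "n \<ge> 1"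
    and "\<forall>i\<in>{1..n}. \<forall>j\<in>{1..n}. i \<noteq> j \<longrightarrow> cmod (z i j) = 1 \<and> z j i = cnj (z i j)"
    and "doubly_noncommuting n z V"
    and "doubly_noncommuting n z V'"
  shows "unitarily_equivalent (UNIV :: 'a set) (UNIV :: 'b set) {1..n} V V' \<longleftrightarrow>
         (\<forall>A. A \<subseteq> {1..n} \<longrightarrow>
            unitarily_equivalent (wandering_subspace n V A) (wandering_subspace n V' A)
              (wandering_index n A) (wandering_data V) (wandering_data V'))"
proof -
  interpret doubly_noncommuting_pair n z V V'
    by unfold_locales (fact assms)+
  show ?thesis
    using unitarily_equivalent_iff_wandering unitarily_equivalent_wandering_data_iff by simp
qed

end
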